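(* Let $\mathbb{F}$ be a field of odd characteristic, let $n\ge 5$, and let $A\in\mathbb{M}_n(\mathbb{F})$ be a non-derogatory matrix with trace $c=\operatorname{Trace}(A)$. Then: (1) If $c\neq 0$, there exists $M\in\mathbb{M}_n(\mathbb{F})$ with $M^2=0$ such that $A+M$ is diagonalizable over $\mathbb{F}$ and its set of eigenvalues is exactly $\{0,c,-c\}$. (2) If $c=0$ and $n$ is odd, there exists $M\in\mathbb{M}_n(\mathbb{F})$ with $M^2=0$ such that $A+M$ is diagonalizable over $\mathbb{F}$ and its set of eigenvalues is exactly $\{0,1,-1\}$. (3) If $c=0$, $n$ is even and $\mathbb{F}\neq\mathbb{F}_3$, there exists $M\in\mathbb{M}_n(\mathbb{F})$ with $M^2=0$ such that $A+M$ is diagonalizable over $\mathbb{F}$ with at most $4$ distinct eigenvalues. In particular, if $\mathbb{F}$ is a finite field of odd cardinality $q\ge 5$, every non-derogatory matrix in $\mathbb{M}_n(\mathbb{F})$ with $n\ge 5$ can be written as $D+M$ with $D$ diagonalizable over $\mathbb{F}$ and $M^2=0$.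
   Context: A square matrix is non-derogatory if its minimal polynomial equals its characteristic polynomial (equivalently, it is similar to the companion matrix of its characteristic polynomial). A matrix $X\in\mathbb{M}_n(\mathbb{F})$ is diagonalizable if there is an invertible $U\in\mathbb{M}_n(\mathbb{F})$ with $U^{-1}XU$ diagonal. A matrix $M$ is square-zero if $M^2=0$. *)

theory Defs
  imports "Jordan_Normal_Form.Char_Poly"
begin

definition mat_trace :: "'a :: comm_ring_1 mat \<Rightarrow> 'a" where
  "mat_trace A = (\<Sum>i<dim_row A. A $$ (i, i))"

definition poly_mat :: "'a :: comm_ring_1 poly \<Rightarrow> 'a mat \<Rightarrow> 'a mat" where
  "poly_mat p A = foldr (\<lambda>c B. c \<cdot>\<^sub>m 1\<^sub>m (dim_row A) + A * B) (coeffs p) (0\<^sub>m (dim_row A) (dim_row A))"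

definition min_poly :: "'a :: field mat \<Rightarrow> 'a poly" where
  "min_poly A = (ARG_MIN degree p. monic p \<and> poly_mat p A = 0\<^sub>m (dim_row A) (dim_row A))"

definition non_derogatory :: "'a :: field mat \<Rightarrow> bool" where
  "non_derogatory A \<longleftrightarrow> min_poly A = char_poly A"

definition diagonalizable :: "'a :: field mat \<Rightarrow> bool" where
  "diagonalizable X \<longleftrightarrow> X \<in> carrier_mat (dim_row X) (dim_row X) \<and>
     (\<exists>U V. U \<in> carrier_mat (dim_row X) (dim_row X) \<and> V \<in> carrier_mat (dim_row X) (dim_row X) \<and>
      U * V = 1\<^sub>m (dim_row X) \<and> V * U = 1\<^sub>m (dim_row X) \<and> diagonal_mat (V * X * U))"

end

theory Submission
  imports Defs "HOL-Computational_Algebra.Polynomial_Factorial" "HOL-Computational_Algebra.Field_as_Ring"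
begin

text \<open>
  A non-derogatory matrix \<open>A\<close> has a cyclic vector \<open>z\<close>: \<open>q(A) z \<noteq> 0\<close> for every nonzero \<open>q\<close> of
  degree \<open>< n\<close> (by primary decomposition of its minimal polynomial). For arbitrary scalars
  \<open>\<mu>\<^sub>k\<close>, the basis \<open>g\<^sub>i(A) z\<close> with \<open>g\<^sub>i = (X - \<mu>\<^sub>0) \<dots> (X - \<mu>\<^sub>i\<^sub>-\<^sub>1)\<close> turns \<open>A\<close> into a matrix \<open>T\<close>
  whose first \<open>n - 1\<close> columns are \<open>\<mu>\<^sub>i e\<^sub>i + e\<^sub>i\<^sub>+\<^sub>1\<close>; only the last diagonal entry is forced, by the trace.
  Put \<open>\<mu>\<^sub>k = w\<close> at the positions \<open>k\<close> with \<open>n - k\<close> odd and at least 3, and \<open>\<mu>\<^sub>k \<noteq> w\<close> elsewhere.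
  A square-zero \<open>N\<close> cancels the subdiagonal entries below these positions and most of the last
  column, and \<open>T + N\<close> then has an explicit basis of eigenvectors, its eigenvalues being the
  diagonal entries of \<open>T\<close>. Choosing the other diagonal entries among \<open>0, \<plusminus>c, \<plusminus>1\<close> and one
  further value \<open>t\<close> (which exists unless the field is \<open>\<bbbF>\<^sub>3\<close>) yields the three spectra, as
  \<open>-w \<noteq> w\<close> in odd characteristic.
\<close>

section \<open>Evaluating polynomials at matrices\<close>

lemma mult_mat_zero_vec [simp]:
  fixes X :: "'a::semiring_0 mat"
  assumes "X \<in> carrier_mat nr nc"
  shows "X *\<^sub>v 0\<^sub>v nc = 0\<^sub>v nr"
  using assms by (auto intro!: eq_vecI)

lemma zero_mat_mult_vec [simp]:
  "v \<in> carrier_vec nc \<Longrightarrow> 0\<^sub>m nr nc *\<^sub>v v = (0\<^sub>v nr :: 'a::semiring_0 vec)"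
  by (auto intro!: eq_vecI)

lemma index_mult_unit_vec:
  fixes X :: "'a::semiring_1 mat"
  assumes "X \<in> carrier_mat nr nc" "i < nr" "j < nc"
  shows "(X *\<^sub>v unit_vec nc j) $ i = X $$ (i, j)"
  using assms by (simp add: scalar_prod_right_unit)

lemma nonzero_mat_imp_nonzero_column:
  fixes X :: "'a::semiring_1 mat"
  assumes X: "X \<in> carrier_mat nr nc" and "X \<noteq> 0\<^sub>m nr nc"
  shows "\<exists>j<nc. X *\<^sub>v unit_vec nc j \<noteq> 0\<^sub>v nr"
proof (rule ccontr)
  assume "\<not> ?thesis"
  then have "X $$ (i, j) = 0" if "i < nr" "j < nc" for i j
    using index_mult_unit_vec[OF X that] that by fastforce
  then have "X = 0\<^sub>m nr nc"
    using X by (auto intro!: eq_matI)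
  with assms show False
    by simp
qed

lemma poly_mat_carrier:
  assumes "A \<in> carrier_mat n n"
  shows "poly_mat p A \<in> carrier_mat n n"
proof -
  have "foldr (\<lambda>c B. c \<cdot>\<^sub>m 1\<^sub>m n + A * B) cs (0\<^sub>m n n) \<in> carrier_mat n n" for cs
    by (induct cs) (use assms in auto)
  then show ?thesis
    using assms unfolding poly_mat_def by auto
qed

lemma dim_poly_mat:
  "dim_row (poly_mat p A) = dim_row A" "dim_col (poly_mat p A) = dim_row A"
proof -
  have "dim_row (foldr (\<lambda>c B. c \<cdot>\<^sub>m 1\<^sub>m (dim_row A) + A * B) cs (0\<^sub>m (dim_row A) (dim_row A))) = dim_row A \<and>
    dim_col (foldr (\<lambda>c B. c \<cdot>\<^sub>m 1\<^sub>m (dim_row A) + A * B) cs (0\<^sub>m (dim_row A) (dim_row A))) = dim_row A" for cs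
    by (induct cs) simp_all
  then show "dim_row (poly_mat p A) = dim_row A" "dim_col (poly_mat p A) = dim_row A"
    unfolding poly_mat_def by auto
qed

lemma poly_mat_0 [simp]: "poly_mat 0 A = 0\<^sub>m (dim_row A) (dim_row A)"
  unfolding poly_mat_def by simp

lemma poly_mat_pCons:
  assumes A: "A \<in> carrier_mat n n"
  shows "poly_mat (pCons a p) A = a \<cdot>\<^sub>m 1\<^sub>m n + A * poly_mat p A"
proof (cases "p = 0 \<and> a = 0")
  case True
  then show ?thesis
    using A by (auto intro!: eq_matI)
next
  case False
  then have "coeffs (pCons a p) = a # coeffs p"
    by (auto simp: cCons_def)
  then show ?thesis
    using A unfolding poly_mat_def by simp
qed

lemma poly_mat_add:
  assumes A: "A \<in> carrier_mat n n"
  shows "poly_mat (p + q) A = poly_mat p A + poly_mat q A"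
proof (induct p q rule: poly_induct2)
  case 0
  show ?case
    using A by simp
next
  case (pCons a p b q)
  have P: "poly_mat p A \<in> carrier_mat n n" and Q: "poly_mat q A \<in> carrier_mat n n"
    using poly_mat_carrier[OF A] by auto
  have "poly_mat (pCons a p + pCons b q) A = (a + b) \<cdot>\<^sub>m 1\<^sub>m n + (A * poly_mat p A + A * poly_mat q A)"
    using pCons A by (simp add: poly_mat_pCons mult_add_distrib_mat[OF A P Q])
  also have "\<dots> = (a \<cdot>\<^sub>m 1\<^sub>m n + A * poly_mat p A) + (b \<cdot>\<^sub>m 1\<^sub>m n + A * poly_mat q A)"
    using A P Q by (auto intro!: eq_matI simp: algebra_simps)
  finally show ?case
    using A by (simp add: poly_mat_pCons)
qed

lemma poly_mat_smult:
  assumes A: "A \<in> carrier_mat n n"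
  shows "poly_mat (Polynomial.smult c p) A = c \<cdot>\<^sub>m poly_mat p A"
proof (induct p)
  case 0
  show ?case
    using A by (auto intro!: eq_matI)
next
  case (pCons a p)
  have P: "poly_mat p A \<in> carrier_mat n n"
    using poly_mat_carrier[OF A] by auto
  have "poly_mat (Polynomial.smult c (pCons a p)) A = (c * a) \<cdot>\<^sub>m 1\<^sub>m n + c \<cdot>\<^sub>m (A * poly_mat p A)"
    using pCons A by (simp add: poly_mat_pCons mult_smult_distrib[OF A P])
  also have "\<dots> = c \<cdot>\<^sub>m (a \<cdot>\<^sub>m 1\<^sub>m n + A * poly_mat p A)"
    using A P by (auto intro!: eq_matI simp: algebra_simps)
  finally show ?case
    using A by (simp add: poly_mat_pCons)
qed

lemma poly_mat_diff:
  assumes A: "A \<in> carrier_mat n n"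
  shows "poly_mat (p - q) A = poly_mat p A - poly_mat q A"
proof -
  have "p - q = p + Polynomial.smult (- 1) q"
    by simp
  then have "poly_mat (p - q) A = poly_mat p A + (- 1) \<cdot>\<^sub>m poly_mat q A"
    by (simp only: poly_mat_add[OF A] poly_mat_smult[OF A])
  also have "\<dots> = poly_mat p A - poly_mat q A"
    using poly_mat_carrier[OF A] by (auto intro!: eq_matI)
  finally show ?thesis .
qed

lemma poly_mat_1:
  assumes A: "A \<in> carrier_mat n n"
  shows "poly_mat 1 A = 1\<^sub>m n"
  using poly_mat_pCons[OF A, of 1 0] A by (auto simp: one_pCons intro!: eq_matI)

lemma poly_mat_mult:
  assumes A: "A \<in> carrier_mat n n"
  shows "poly_mat (p * q) A = poly_mat p A * poly_mat q A"
proof (induct p)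
  case 0
  show ?case
    using A poly_mat_carrier[OF A, of q] by simp
next
  case (pCons a p)
  have P: "poly_mat p A \<in> carrier_mat n n" and Q: "poly_mat q A \<in> carrier_mat n n"
    using poly_mat_carrier[OF A] by auto
  have "poly_mat (pCons a p * q) A = a \<cdot>\<^sub>m poly_mat q A + (0 \<cdot>\<^sub>m 1\<^sub>m n + A * (poly_mat p A * poly_mat q A))"
    by (simp add: poly_mat_add[OF A] poly_mat_smult[OF A] poly_mat_pCons[OF A] pCons)
  also have "\<dots> = (a \<cdot>\<^sub>m 1\<^sub>m n) * poly_mat q A + A * poly_mat p A * poly_mat q A"
    using A P Q by (auto intro!: eq_matI simp: assoc_mult_mat[OF A P Q])
  also have "\<dots> = (a \<cdot>\<^sub>m 1\<^sub>m n + A * poly_mat p A) * poly_mat q A"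
    by (rule add_mult_distrib_mat[symmetric]) (use A P Q in auto)
  finally show ?case
    by (simp add: poly_mat_pCons[OF A])
qed

lemma poly_mat_linear:
  assumes A: "A \<in> carrier_mat n n"
  shows "poly_mat [:b, 1:] A = b \<cdot>\<^sub>m 1\<^sub>m n + A"
  using poly_mat_pCons[OF A, of b 1] poly_mat_1[OF A] A by (simp add: one_pCons)

lemma poly_mat_mult_vec:
  assumes A: "A \<in> carrier_mat n n" and v: "v \<in> carrier_vec n"
  shows "poly_mat (p * q) A *\<^sub>v v = poly_mat p A *\<^sub>v (poly_mat q A *\<^sub>v v)"
  unfolding poly_mat_mult[OF A] by (rule assoc_mult_mat_vec[OF poly_mat_carrier[OF A] poly_mat_carrier[OF A] v])

lemma poly_mat_mult_vec_eq_0: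
  assumes A: "A \<in> carrier_mat n n" and v: "v \<in> carrier_vec n"
    and "poly_mat a A *\<^sub>v v = 0\<^sub>v n"
  shows "poly_mat (b * a) A *\<^sub>v v = 0\<^sub>v n"
  using assms poly_mat_carrier[OF A, of b] by (simp add: poly_mat_mult_vec)

lemma index_poly_mat_sum_mult_vec:
  assumes A: "A \<in> carrier_mat n n" and v: "v \<in> carrier_vec n" and i: "i < n"
  shows "(poly_mat (\<Sum>x\<in>S. f x) A *\<^sub>v v) $ i = (\<Sum>x\<in>S. (poly_mat (f x) A *\<^sub>v v) $ i)"
proof (induct S rule: infinite_finite_induct)
  case (insert x S)
  have "poly_mat (f x + sum f S) A *\<^sub>v v = poly_mat (f x) A *\<^sub>v v + poly_mat (sum f S) A *\<^sub>v v"
    unfolding poly_mat_add[OF A] by (rule add_mult_distrib_mat_vec[OF poly_mat_carrier[OF A] poly_mat_carrier[OF A] v])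
  then show ?case
    using insert A i by (simp add: dim_poly_mat)
qed (use A v i in simp_all)

lemma index_poly_mat_smult_mult_vec:
  assumes A: "A \<in> carrier_mat n n" and v: "v \<in> carrier_vec n" and i: "i < n"
  shows "(poly_mat (Polynomial.smult c p) A *\<^sub>v v) $ i = c * (poly_mat p A *\<^sub>v v) $ i"
  using poly_mat_carrier[OF A, of p] v i by (simp add: poly_mat_smult[OF A] scalar_prod_smult_left)

lemma (in comm_ring_hom) poly_mat_hom:
  assumes A: "A \<in> carrier_mat n n"
  shows "poly_mat (map_poly hom p) (map_mat hom A) = map_mat hom (poly_mat p A)"
proof (induct p)
  case 0
  show ?case
    using A by (auto intro!: eq_matI)
next
  case (pCons a p)
  have A': "map_mat hom A \<in> carrier_mat n n"
    using A by simp
  have P: "poly_mat p A \<in> carrier_mat n n"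
    by (rule poly_mat_carrier[OF A])
  have "poly_mat (map_poly hom (pCons a p)) (map_mat hom A)
      = hom a \<cdot>\<^sub>m 1\<^sub>m n + map_mat hom (A * poly_mat p A)"
    unfolding map_poly_pCons_hom poly_mat_pCons[OF A'] pCons mat_hom_mult[OF A P] ..
  also have "\<dots> = map_mat hom (a \<cdot>\<^sub>m 1\<^sub>m n + A * poly_mat p A)"
    using A P by (auto intro!: eq_matI simp: hom_distribs)
  finally show ?case
    unfolding poly_mat_pCons[OF A] .
qed

section \<open>Cyclic vectors of non-derogatory matrices\<close>

definition cyclic_vector :: "'a::comm_ring_1 mat \<Rightarrow> 'a vec \<Rightarrow> bool" where
  "cyclic_vector A z \<longleftrightarrow> z \<in> carrier_vec (dim_row A) \<and>
     (\<forall>q. q \<noteq> 0 \<longrightarrow> degree q < dim_row A \<longrightarrow> poly_mat q A *\<^sub>v z \<noteq> 0\<^sub>v (dim_row A))"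

definition poly_orbit_mat :: "'a::comm_ring_1 mat \<Rightarrow> 'a vec \<Rightarrow> (nat \<Rightarrow> 'a poly) \<Rightarrow> 'a mat" where
  "poly_orbit_mat A v g = mat (dim_row A) (dim_row A) (\<lambda>(i, j). (poly_mat (g j) A *\<^sub>v v) $ i)"

lemma poly_orbit_mat_carrier: "poly_orbit_mat A v g \<in> carrier_mat (dim_row A) (dim_row A)"
  unfolding poly_orbit_mat_def by simp

lemma poly_orbit_mat_mult_vec:
  assumes A: "A \<in> carrier_mat n n" and v: "v \<in> carrier_vec n" and c: "c \<in> carrier_vec n"
  shows "poly_orbit_mat A v g *\<^sub>v c = poly_mat (\<Sum>j<n. Polynomial.smult (c $ j) (g j)) A *\<^sub>v v"
proof (rule eq_vecI)
  fix i
  assume "i < dim_vec (poly_mat (\<Sum>j<n. Polynomial.smult (c $ j) (g j)) A *\<^sub>v v)"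
  then have i: "i < n"
    using A by (simp add: dim_poly_mat)
  have "(poly_orbit_mat A v g *\<^sub>v c) $ i = (\<Sum>j<n. c $ j * (poly_mat (g j) A *\<^sub>v v) $ i)"
    using A c i unfolding poly_orbit_mat_def by (simp add: scalar_prod_def lessThan_atLeast0 mult.commute)
  also have "\<dots> = (poly_mat (\<Sum>j<n. Polynomial.smult (c $ j) (g j)) A *\<^sub>v v) $ i"
    unfolding index_poly_mat_sum_mult_vec[OF A v i] index_poly_mat_smult_mult_vec[OF A v i] ..
  finally show "(poly_orbit_mat A v g *\<^sub>v c) $ i = (poly_mat (\<Sum>j<n. Polynomial.smult (c $ j) (g j)) A *\<^sub>v v) $ i" .
qed (use A in \<open>simp add: poly_orbit_mat_def dim_poly_mat\<close>)

lemma poly_orbit_mat_mult_unit_vec: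
  assumes A: "A \<in> carrier_mat n n" and v: "v \<in> carrier_vec n" and "j < n"
  shows "poly_orbit_mat A v g *\<^sub>v unit_vec n j = poly_mat (g j) A *\<^sub>v v"
proof -
  have K: "poly_orbit_mat A v g \<in> carrier_mat n n"
    using poly_orbit_mat_carrier[of A v g] A by simp
  show ?thesis
    using index_mult_unit_vec[OF K _ \<open>j < n\<close>] \<open>j < n\<close> A K
    by (intro eq_vecI) (simp_all add: poly_orbit_mat_def dim_poly_mat)
qed

lemma sum_smult_nonzero_if_degrees_distinct:
  fixes g :: "nat \<Rightarrow> 'a::idom poly"
  assumes "\<And>j. j < n \<Longrightarrow> degree (g j) = j" and "\<And>j. j < n \<Longrightarrow> g j \<noteq> 0"
    and "j0 < n" and "c j0 \<noteq> 0"
  shows "(\<Sum>j<n. Polynomial.smult (c j) (g j)) \<noteq> 0"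
  using assms
proof (induct n)
  case (Suc n)
  show ?case
  proof (cases "c n = 0")
    case True
    then show ?thesis
      using Suc by (cases "j0 = n") auto
  next
    case False
    have "coeff (\<Sum>j<n. Polynomial.smult (c j) (g j)) n = 0"
      using Suc.prems(1) by (simp add: coeff_sum coeff_eq_0)
    then have "coeff (\<Sum>j<Suc n. Polynomial.smult (c j) (g j)) n = c n * lead_coeff (g n)"
      using Suc.prems(1)[of n] by simp
    moreover have "c n * lead_coeff (g n) \<noteq> 0"
      using False Suc.prems(2)[of n] by simp
    ultimately show ?thesis
      by (metis coeff_0)
  qed
qed simp

lemma degree_sum_smult_less:
  fixes g :: "nat \<Rightarrow> 'a::comm_ring_1 poly"
  assumes "0 < n" and "\<And>j. j < n \<Longrightarrow> degree (g j) < n"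
  shows "degree (\<Sum>j<n. Polynomial.smult (c j) (g j)) < n"
proof -
  have "degree (g j) \<le> n - 1" if "j < n" for j
    using assms(2)[OF that] by simp
  then have "degree (\<Sum>j<n. Polynomial.smult (c j) (g j)) \<le> n - 1"
    by (intro degree_sum_le) (auto intro: order.trans[OF degree_smult_le])
  then show ?thesis
    using \<open>0 < n\<close> by simp
qed

lemma poly_orbit_mat_det_nonzero:
  fixes A :: "'a::idom mat"
  assumes A: "A \<in> carrier_mat n n" and z: "cyclic_vector A z"
    and deg: "\<And>j. j < n \<Longrightarrow> degree (g j) = j" and nz: "\<And>j. j < n \<Longrightarrow> g j \<noteq> 0"
  shows "det (poly_orbit_mat A z g) \<noteq> 0"
proof
  have K: "poly_orbit_mat A z g \<in> carrier_mat n n"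
    using poly_orbit_mat_carrier[of A z g] A by simp
  have zc: "z \<in> carrier_vec n"
    using z A unfolding cyclic_vector_def by simp
  assume "det (poly_orbit_mat A z g) = 0"
  then obtain c where c: "c \<in> carrier_vec n" and "c \<noteq> 0\<^sub>v n"
    and Kc: "poly_orbit_mat A z g *\<^sub>v c = 0\<^sub>v n"
    unfolding det_0_iff_vec_prod_zero[OF K] by blast
  then obtain j0 where "j0 < n" and "c $ j0 \<noteq> 0"
    by (metis eq_vecI carrier_vecD index_zero_vec)
  define G where "G = (\<Sum>j<n. Polynomial.smult (c $ j) (g j))"
  have "G \<noteq> 0"
    unfolding G_def using sum_smult_nonzero_if_degrees_distinct[OF deg nz \<open>j0 < n\<close>] \<open>c $ j0 \<noteq> 0\<close> by blast
  moreover have "degree G < n"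
    unfolding G_def using \<open>j0 < n\<close> deg by (intro degree_sum_smult_less) auto
  moreover have "poly_mat G A *\<^sub>v z = 0\<^sub>v n"
    using Kc unfolding G_def poly_orbit_mat_mult_vec[OF A zc c] .
  ultimately show False
    using z A unfolding cyclic_vector_def by auto
qed

lemma det_nonzero_imp_inverse:
  fixes A :: "'a::field mat"
  assumes "A \<in> carrier_mat n n" and "det A \<noteq> 0"
  shows "\<exists>B \<in> carrier_mat n n. A * B = 1\<^sub>m n \<and> B * A = 1\<^sub>m n"
  using det_non_zero_imp_unit[OF assms, of undefined] unfolding Units_def ring_mat_def by auto

lemma vec_annihilator_exists:
  fixes A :: "'a::field mat"
  assumes A: "A \<in> carrier_mat n n" and v: "v \<in> carrier_vec n"
  shows "\<exists>q. q \<noteq> 0 \<and> poly_mat q A *\<^sub>v v = 0\<^sub>v n"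
proof (cases "cyclic_vector A v")
  case False
  then show ?thesis
    using A v unfolding cyclic_vector_def by auto
next
  case True
  txt \<open>Then the matrix with columns \<open>A\<^sup>j v\<close>, \<open>j < n\<close>, is invertible, so \<open>A\<^sup>n v\<close> is a combination of them.\<close>
  define K where "K = poly_orbit_mat A v (monom 1)"
  have K: "K \<in> carrier_mat n n"
    using poly_orbit_mat_carrier[of A v] A unfolding K_def by simp
  have "det K \<noteq> 0"
    unfolding K_def by (rule poly_orbit_mat_det_nonzero[OF A True]) (simp_all add: degree_monom_eq)
  then obtain K' where K': "K' \<in> carrier_mat n n" and KK': "K * K' = 1\<^sub>m n"
    using det_nonzero_imp_inverse[OF K] by blast
  define w where "w = poly_mat (monom 1 n) A *\<^sub>v v"
  have w: "w \<in> carrier_vec n"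
    unfolding w_def by (rule mult_mat_vec_carrier[OF poly_mat_carrier[OF A] v])
  define c where "c = K' *\<^sub>v w"
  have c: "c \<in> carrier_vec n"
    unfolding c_def by (rule mult_mat_vec_carrier[OF K' w])
  have Kc: "K *\<^sub>v c = w"
    unfolding c_def assoc_mult_mat_vec[OF K K' w, symmetric] KK' using w by simp
  define q where "q = monom 1 n - (\<Sum>j<n. Polynomial.smult (c $ j) (monom 1 j))"
  have "coeff q n = 1"
    unfolding q_def by (simp add: coeff_sum)
  then have "q \<noteq> 0"
    by auto
  moreover have "poly_mat q A *\<^sub>v v = 0\<^sub>v n"
    using Kc w poly_mat_carrier[OF A]
    unfolding q_def poly_mat_diff[OF A] K_def poly_orbit_mat_mult_vec[OF A v c] w_def
    by (simp add: minus_mult_distrib_mat_vec[OF poly_mat_carrier[OF A] poly_mat_carrier[OF A] v])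
  ultimately show ?thesis
    by blast
qed

lemma mat_annihilator_exists:
  fixes A :: "'a::field mat"
  assumes A: "A \<in> carrier_mat n n"
  shows "\<exists>q. q \<noteq> 0 \<and> poly_mat q A = 0\<^sub>m n n"
proof -
  have "\<forall>j. \<exists>q. j < n \<longrightarrow> q \<noteq> 0 \<and> poly_mat q A *\<^sub>v unit_vec n j = 0\<^sub>v n"
    using vec_annihilator_exists[OF A unit_vec_carrier] by blast
  then obtain f where f: "\<And>j. j < n \<Longrightarrow> f j \<noteq> 0 \<and> poly_mat (f j) A *\<^sub>v unit_vec n j = 0\<^sub>v n"
    by metis
  define q where "q = (\<Prod>j<n. f j)"
  have "poly_mat q A *\<^sub>v unit_vec n j = 0\<^sub>v n" if "j < n" for j
  proof -
    have "q = (\<Prod>k\<in>{..<n} - {j}. f k) * f j"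
      unfolding q_def using prod.remove[of "{..<n}" j f] that by (simp add: mult.commute)
    then show ?thesis
      using poly_mat_mult_vec_eq_0[OF A unit_vec_carrier] f[OF that] by simp
  qed
  then have "poly_mat q A = 0\<^sub>m n n"
    using nonzero_mat_imp_nonzero_column[OF poly_mat_carrier[OF A]] by blast
  moreover have "q \<noteq> 0"
    unfolding q_def using f by auto
  ultimately show ?thesis
    by blast
qed

lemma min_poly_minimal:
  fixes A :: "'a::field mat"
  assumes A: "A \<in> carrier_mat n n"
  shows "poly_mat (min_poly A) A = 0\<^sub>m n n"
    and "\<And>q. q \<noteq> 0 \<Longrightarrow> poly_mat q A = 0\<^sub>m n n \<Longrightarrow> degree (min_poly A) \<le> degree q"
proof -
  let ?P = "\<lambda>p. monic p \<and> poly_mat p A = 0\<^sub>m (dim_row A) (dim_row A)"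
  have monic: "?P (Polynomial.smult (inverse (lead_coeff q)) q)"
    if "q \<noteq> 0" "poly_mat q A = 0\<^sub>m n n" for q
    using that A by (auto simp: poly_mat_smult[OF A] intro!: eq_matI)
  obtain q where "q \<noteq> 0" "poly_mat q A = 0\<^sub>m n n"
    using mat_annihilator_exists[OF A] by blast
  from arg_min_nat_lemma[of ?P, OF monic[OF this], of degree]
  have min: "?P (min_poly A)" "\<And>p. ?P p \<Longrightarrow> degree (min_poly A) \<le> degree p"
    unfolding min_poly_def by auto
  then show "poly_mat (min_poly A) A = 0\<^sub>m n n"
    using A by simp
  fix q
  assume "q \<noteq> 0" "poly_mat q A = 0\<^sub>m n n"
  then show "degree (min_poly A) \<le> degree q"
    using min(2)[OF monic] by simp
qed

lemma non_derogatory_char_poly_minimal: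
  fixes A :: "'a::field mat"
  assumes A: "A \<in> carrier_mat n n" and "non_derogatory A"
  shows "poly_mat (char_poly A) A = 0\<^sub>m n n"
    and "\<And>q. q \<noteq> 0 \<Longrightarrow> poly_mat q A = 0\<^sub>m n n \<Longrightarrow> n \<le> degree q"
  using min_poly_minimal[OF A] \<open>non_derogatory A\<close> degree_monic_char_poly[OF A]
  unfolding non_derogatory_def by auto

definition generates_annihilator :: "'a::comm_ring_1 mat \<Rightarrow> 'a vec \<Rightarrow> 'a poly \<Rightarrow> bool" where
  "generates_annihilator A v a \<longleftrightarrow> poly_mat a A *\<^sub>v v = 0\<^sub>v (dim_row A) \<and>
     (\<forall>q. poly_mat q A *\<^sub>v v = 0\<^sub>v (dim_row A) \<longrightarrow> a dvd q)"

lemma coprime_annihilators_imp_zero: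
  fixes A :: "'a::field_gcd mat"
  assumes A: "A \<in> carrier_mat n n" and v: "v \<in> carrier_vec n" and "coprime a b"
    and a: "poly_mat a A *\<^sub>v v = 0\<^sub>v n" and b: "poly_mat b A *\<^sub>v v = 0\<^sub>v n"
  shows "v = 0\<^sub>v n"
proof -
  obtain x y where xy: "x * a + y * b = 1"
    using bezout_coefficients_fst_snd[of a b] \<open>coprime a b\<close> by (metis coprime_imp_gcd_eq_1)
  have "v = poly_mat (x * a + y * b) A *\<^sub>v v"
    using v by (simp add: xy poly_mat_1[OF A])
  also have "\<dots> = poly_mat (x * a) A *\<^sub>v v + poly_mat (y * b) A *\<^sub>v v"
    unfolding poly_mat_add[OF A] by (rule add_mult_distrib_mat_vec[OF poly_mat_carrier[OF A] poly_mat_carrier[OF A] v])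
  also have "\<dots> = 0\<^sub>v n"
    using poly_mat_mult_vec_eq_0[OF A v a] poly_mat_mult_vec_eq_0[OF A v b] by simp
  finally show ?thesis .
qed

lemma generates_annihilator_dvd_of_sum:
  fixes A :: "'a::comm_ring_1 mat"
  assumes A: "A \<in> carrier_mat n n" and u: "u \<in> carrier_vec n" and w: "w \<in> carrier_vec n"
    and gen: "generates_annihilator A u a" and b: "poly_mat b A *\<^sub>v w = 0\<^sub>v n"
    and q: "poly_mat q A *\<^sub>v (u + w) = 0\<^sub>v n"
  shows "a dvd b * q"
proof -
  have "poly_mat (b * q) A *\<^sub>v u + poly_mat (q * b) A *\<^sub>v w = 0\<^sub>v n"
    using poly_mat_mult_vec_eq_0[OF A _ q, of b] u w
    by (simp add: mult_add_distrib_mat_vec[OF poly_mat_carrier[OF A] u w] mult.commute)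
  then have "poly_mat (b * q) A *\<^sub>v u = 0\<^sub>v n"
    using poly_mat_mult_vec_eq_0[OF A w b, of q] poly_mat_carrier[OF A, of "b * q"] u by simp
  then show ?thesis
    using gen A unfolding generates_annihilator_def by simp
qed

lemma generates_annihilator_add:
  fixes A :: "'a::field_gcd mat"
  assumes A: "A \<in> carrier_mat n n" and u: "u \<in> carrier_vec n" and w: "w \<in> carrier_vec n"
    and "coprime a b" and gen_u: "generates_annihilator A u a" and gen_w: "generates_annihilator A w b"
  shows "generates_annihilator A (u + w) (a * b)"
proof -
  have au: "poly_mat a A *\<^sub>v u = 0\<^sub>v n" and bw: "poly_mat b A *\<^sub>v w = 0\<^sub>v n"
    using gen_u gen_w A unfolding generates_annihilator_def by auto
  have "poly_mat (a * b) A *\<^sub>v (u + w) = poly_mat (b * a) A *\<^sub>v u + poly_mat (a * b) A *\<^sub>v w"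
    by (simp add: mult_add_distrib_mat_vec[OF poly_mat_carrier[OF A] u w] mult.commute)
  also have "\<dots> = 0\<^sub>v n"
    using poly_mat_mult_vec_eq_0[OF A u au] poly_mat_mult_vec_eq_0[OF A w bw] by simp
  finally have ann: "poly_mat (a * b) A *\<^sub>v (u + w) = 0\<^sub>v n" .
  have "a * b dvd q" if q: "poly_mat q A *\<^sub>v (u + w) = 0\<^sub>v n" for q
  proof -
    have "a dvd b * q"
      by (rule generates_annihilator_dvd_of_sum[OF A u w gen_u bw q])
    moreover have "b dvd a * q"
      by (rule generates_annihilator_dvd_of_sum[OF A w u gen_w au]) (use q u w in \<open>simp add: comm_add_vec\<close>)
    ultimately show ?thesis
      using \<open>coprime a b\<close>
      by (simp add: coprime_dvd_mult_right_iff coprime_commute divides_mult)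
  qed
  then show ?thesis
    using ann A unfolding generates_annihilator_def by simp
qed

lemma generates_annihilator_prime_power:
  fixes A :: "'a::field_gcd mat"
  assumes A: "A \<in> carrier_mat n n" and u: "u \<in> carrier_vec n" and p: "prime p"
    and ann: "poly_mat (p ^ e) A *\<^sub>v u = 0\<^sub>v n"
    and not_ann: "poly_mat (p ^ (e - 1)) A *\<^sub>v u \<noteq> 0\<^sub>v n"
  shows "generates_annihilator A u (p ^ e)"
proof -
  have "p ^ e dvd q" if qu: "poly_mat q A *\<^sub>v u = 0\<^sub>v n" and "q \<noteq> 0" for q
  proof (rule ccontr)
    assume nd: "\<not> p ^ e dvd q"
    define k where "k = multiplicity p q"
    have ke: "k < e"
      using nd multiplicity_dvd'[of e p q] unfolding k_def by linarith
    obtain s where qs: "q = p ^ k * s" and ns: "\<not> p dvd s"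
      using multiplicity_decompose'[OF \<open>q \<noteq> 0\<close>] p unfolding k_def
      by (metis not_prime_unit)
    define v where "v = poly_mat (p ^ k) A *\<^sub>v u"
    have v: "v \<in> carrier_vec n"
      unfolding v_def by (rule mult_mat_vec_carrier[OF poly_mat_carrier[OF A] u])
    have "poly_mat s A *\<^sub>v v = 0\<^sub>v n"
      using qu qs unfolding v_def poly_mat_mult_vec[OF A u, symmetric] by (simp add: mult.commute)
    moreover have "poly_mat (p ^ (e - k)) A *\<^sub>v v = 0\<^sub>v n"
      using ann ke unfolding v_def poly_mat_mult_vec[OF A u, symmetric] power_add[symmetric] by simp
    moreover have "coprime s (p ^ (e - k))"
      by (rule prime_imp_power_coprime[OF p ns])
    ultimately have "v = 0\<^sub>v n"
      using coprime_annihilators_imp_zero[OF A v] by blast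
    then have "poly_mat (p ^ (e - 1 - k) * p ^ k) A *\<^sub>v u = 0\<^sub>v n"
      using poly_mat_carrier[OF A] unfolding poly_mat_mult_vec[OF A u] v_def[symmetric] by simp
    with not_ann ke show False
      by (simp add: power_add[symmetric])
  qed
  then show ?thesis
    using ann A unfolding generates_annihilator_def by (metis carrier_matD(1) dvd_0_right)
qed

lemma generates_annihilator_prime_power_exists:
  fixes A :: "'a::field_gcd mat"
  assumes A: "A \<in> carrier_mat n n" and "m \<noteq> 0" and m: "poly_mat m A = 0\<^sub>m n n"
    and minimal: "\<And>q. q \<noteq> 0 \<Longrightarrow> poly_mat q A = 0\<^sub>m n n \<Longrightarrow> degree m \<le> degree q"
    and p: "prime p" "p dvd m"
  shows "\<exists>u \<in> carrier_vec n. generates_annihilator A u (p ^ multiplicity p m)"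
proof -
  define e where "e = multiplicity p m"
  obtain r where mr: "m = p ^ e * r"
    using multiplicity_dvd[of p m] unfolding e_def by (auto elim: dvdE)
  have "0 < e"
    using p \<open>m \<noteq> 0\<close> unfolding e_def by (simp add: prime_multiplicity_gt_zero_iff)
  define h where "h = p ^ (e - 1) * r"
  have mh: "m = p * h"
    using mr \<open>0 < e\<close> unfolding h_def by (cases e) (simp_all add: mult.assoc)
  have "p \<noteq> 0" "h \<noteq> 0"
    using mh \<open>m \<noteq> 0\<close> by auto
  have "degree p \<noteq> 0"
    using is_unit_iff_degree[OF \<open>p \<noteq> 0\<close>] p(1) not_prime_unit by blast
  then have "degree h < degree m"
    using mh degree_mult_eq[OF \<open>p \<noteq> 0\<close> \<open>h \<noteq> 0\<close>] by simp
  moreover note \<open>h \<noteq> 0\<close>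
  ultimately have "poly_mat h A \<noteq> 0\<^sub>m n n"
    using minimal[of h] by linarith
  then obtain j where "j < n" and hj: "poly_mat h A *\<^sub>v unit_vec n j \<noteq> 0\<^sub>v n"
    using nonzero_mat_imp_nonzero_column[OF poly_mat_carrier[OF A]] by blast
  define u where "u = poly_mat r A *\<^sub>v unit_vec n j"
  have u: "u \<in> carrier_vec n"
    unfolding u_def by (rule mult_mat_vec_carrier[OF poly_mat_carrier[OF A] unit_vec_carrier])
  have "poly_mat (p ^ e) A *\<^sub>v u = poly_mat m A *\<^sub>v unit_vec n j"
    unfolding u_def mr poly_mat_mult_vec[OF A unit_vec_carrier] ..
  also have "\<dots> = 0\<^sub>v n"
    using m by simp
  finally have "poly_mat (p ^ e) A *\<^sub>v u = 0\<^sub>v n" .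
  moreover have "poly_mat (p ^ (e - 1)) A *\<^sub>v u \<noteq> 0\<^sub>v n"
    using hj unfolding u_def h_def poly_mat_mult_vec[OF A unit_vec_carrier] .
  ultimately show ?thesis
    using generates_annihilator_prime_power[OF A u p(1)] u unfolding e_def by blast
qed

lemma generates_annihilator_prod_prime_powers:
  fixes A :: "'a::field_gcd mat"
  assumes A: "A \<in> carrier_mat n n" and "m \<noteq> 0" and m: "poly_mat m A = 0\<^sub>m n n"
    and minimal: "\<And>q. q \<noteq> 0 \<Longrightarrow> poly_mat q A = 0\<^sub>m n n \<Longrightarrow> degree m \<le> degree q"
    and S: "S \<subseteq> prime_factors m"
  shows "\<exists>z \<in> carrier_vec n. generates_annihilator A z (\<Prod>p\<in>S. p ^ multiplicity p m)"
  using finite_subset[OF S finite_set_mset] S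
proof (induct S rule: finite_subset_induct')
  case empty
  have "generates_annihilator A (0\<^sub>v n) 1"
    using A poly_mat_carrier[OF A] unfolding generates_annihilator_def by simp
  then show ?case
    by auto
next
  case (insert p S)
  then obtain z where z: "z \<in> carrier_vec n"
    and gen_z: "generates_annihilator A z (\<Prod>p\<in>S. p ^ multiplicity p m)"
    by auto
  obtain u where u: "u \<in> carrier_vec n" and gen_u: "generates_annihilator A u (p ^ multiplicity p m)"
    using generates_annihilator_prime_power_exists[OF A \<open>m \<noteq> 0\<close> m minimal] insert by auto
  have "coprime (p ^ multiplicity p m) (\<Prod>p\<in>S. p ^ multiplicity p m)"
  proof (rule prod_coprime_right)
    fix p'
    assume "p' \<in> S"
    then have "coprime p p'"
      using insert by (intro primes_coprime) auto
    then show "coprime (p ^ multiplicity p m) (p' ^ multiplicity p' m)"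
      by simp
  qed
  then have "generates_annihilator A (u + z) (\<Prod>p\<in>insert p S. p ^ multiplicity p m)"
    using generates_annihilator_add[OF A u z _ gen_u gen_z] insert by simp
  moreover have "u + z \<in> carrier_vec n"
    using u z by simp
  ultimately show ?case
    by blast
qed

lemma generates_annihilator_exists:
  fixes A :: "'a::field_gcd mat"
  assumes A: "A \<in> carrier_mat n n" and "m \<noteq> 0" and m: "poly_mat m A = 0\<^sub>m n n"
    and minimal: "\<And>q. q \<noteq> 0 \<Longrightarrow> poly_mat q A = 0\<^sub>m n n \<Longrightarrow> degree m \<le> degree q"
  shows "\<exists>z \<in> carrier_vec n. generates_annihilator A z m"
proof -
  obtain z where z: "z \<in> carrier_vec n" and "generates_annihilator A z (normalize m)"
    using generates_annihilator_prod_prime_powers[OF A \<open>m \<noteq> 0\<close> m minimal order.refl]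
      prod_prime_factors[OF \<open>m \<noteq> 0\<close>] by auto
  then have "generates_annihilator A z m"
    using m A unfolding generates_annihilator_def by simp
  then show ?thesis
    using z by blast
qed

lemma cyclic_vector_exists_field_gcd:
  fixes A :: "'a::field_gcd mat"
  assumes A: "A \<in> carrier_mat n n" and "m \<noteq> 0" and m: "poly_mat m A = 0\<^sub>m n n" and "degree m = n"
    and minimal: "\<And>q. q \<noteq> 0 \<Longrightarrow> poly_mat q A = 0\<^sub>m n n \<Longrightarrow> n \<le> degree q"
  shows "\<exists>z. cyclic_vector A z"
proof -
  obtain z where z: "z \<in> carrier_vec n" and gen: "generates_annihilator A z m"
    using generates_annihilator_exists[OF A \<open>m \<noteq> 0\<close> m] minimal \<open>degree m = n\<close> by auto
  have "cyclic_vector A z"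
    unfolding cyclic_vector_def
  proof (intro conjI allI impI notI)
    show "z \<in> carrier_vec (dim_row A)"
      using z A by simp
    fix q
    assume "q \<noteq> 0" "degree q < dim_row A" "poly_mat q A *\<^sub>v z = 0\<^sub>v (dim_row A)"
    then have "m dvd q"
      using gen unfolding generates_annihilator_def by simp
    then have "degree m \<le> degree q"
      using \<open>q \<noteq> 0\<close> by (rule dvd_imp_degree_le)
    with \<open>degree q < dim_row A\<close> \<open>degree m = n\<close> A show False
      by simp
  qed
  then show ?thesis ..
qed

text \<open>A general field carries no gcd structure, so polynomial factorisation is only available over
  this isomorphic copy of it, which receives the trivial Euclidean structure that Field_as_Ring
  gives to \<^typ>\<open>rat\<close>, \<^typ>\<open>real\<close> and \<^typ>\<open>complex\<close>.\<close>

typedef 'a field_as_ring = "UNIV :: 'a::field set"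
  morphisms from_ring to_ring ..

lemmas field_as_ring_simps = to_ring_inverse[OF UNIV_I] from_ring_inverse from_ring_inject[symmetric]

instantiation field_as_ring :: (field) field
begin
definition "0 = to_ring 0"
definition "1 = to_ring 1"
definition "x + y = to_ring (from_ring x + from_ring y)"
definition "x - y = to_ring (from_ring x - from_ring y)"
definition "- x = to_ring (- from_ring x)"
definition "x * y = to_ring (from_ring x * from_ring y)"
definition "inverse x = to_ring (inverse (from_ring x))"
definition "x div y = to_ring (from_ring x / from_ring y)"
instance
  by standard (auto simp: field_as_ring_simps zero_field_as_ring_def one_field_as_ring_def
      plus_field_as_ring_def minus_field_as_ring_def uminus_field_as_ring_def
      times_field_as_ring_def inverse_field_as_ring_def divide_field_as_ring_def
      algebra_simps divide_inverse)
end

instantiation field_as_ring ::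
  (field) "{unique_euclidean_ring, normalization_euclidean_semiring, normalization_semidom_multiplicative}"
begin
definition [simp]: "normalize_field_as_ring = (normalize_field :: 'a field_as_ring \<Rightarrow> _)"
definition [simp]: "unit_factor_field_as_ring = (unit_factor_field :: 'a field_as_ring \<Rightarrow> _)"
definition [simp]: "modulo_field_as_ring = (mod_field :: 'a field_as_ring \<Rightarrow> _)"
definition [simp]: "euclidean_size_field_as_ring = (euclidean_size_field :: 'a field_as_ring \<Rightarrow> _)"
definition [simp]: "division_segment (x :: 'a field_as_ring) = 1"
instance
  by standard (simp_all add: dvd_field_iff field_split_simps split: if_splits)
end

instantiation field_as_ring :: (field) euclidean_ring_gcd
begin
definition "gcd_field_as_ring = (Euclidean_Algorithm.gcd :: 'a field_as_ring \<Rightarrow> _)"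
definition "lcm_field_as_ring = (Euclidean_Algorithm.lcm :: 'a field_as_ring \<Rightarrow> _)"
definition "Gcd_field_as_ring = (Euclidean_Algorithm.Gcd :: 'a field_as_ring set \<Rightarrow> _)"
definition "Lcm_field_as_ring = (Euclidean_Algorithm.Lcm :: 'a field_as_ring set \<Rightarrow> _)"
instance
  by standard (simp_all add: gcd_field_as_ring_def lcm_field_as_ring_def
      Gcd_field_as_ring_def Lcm_field_as_ring_def)
end

instance field_as_ring :: (field) field_gcd ..

lemma field_hom_to_ring: "field_hom (to_ring :: 'a::field \<Rightarrow> 'a field_as_ring)"
  by unfold_locales (simp_all add: plus_field_as_ring_def times_field_as_ring_def
      one_field_as_ring_def zero_field_as_ring_def field_as_ring_simps)

lemma field_hom_from_ring: "field_hom (from_ring :: 'a::field field_as_ring \<Rightarrow> 'a)"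
  by unfold_locales (simp_all add: plus_field_as_ring_def times_field_as_ring_def
      one_field_as_ring_def zero_field_as_ring_def field_as_ring_simps)

lemma (in field_hom) cyclic_vector_of_hom:
  assumes A: "A \<in> carrier_mat n n" and z: "z \<in> carrier_vec n"
    and cyc: "cyclic_vector (map_mat hom A) (map_vec hom z)"
  shows "cyclic_vector A z"
  unfolding cyclic_vector_def
proof (intro conjI allI impI notI)
  show "z \<in> carrier_vec (dim_row A)"
    using z A by simp
  fix q
  assume "q \<noteq> 0" "degree q < dim_row A" and qz: "poly_mat q A *\<^sub>v z = 0\<^sub>v (dim_row A)"
  have "poly_mat (map_poly hom q) (map_mat hom A) *\<^sub>v map_vec hom z = map_vec hom (poly_mat q A *\<^sub>v z)"
    unfolding poly_mat_hom[OF A] by (rule mult_mat_vec_hom[symmetric, OF poly_mat_carrier[OF A] z])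
  also have "\<dots> = 0\<^sub>v n"
    using qz A by simp
  finally show False
    using cyc \<open>q \<noteq> 0\<close> \<open>degree q < dim_row A\<close> A unfolding cyclic_vector_def by simp
qed

theorem non_derogatory_imp_cyclic_vector:
  fixes A :: "'a::field mat"
  assumes A: "A \<in> carrier_mat n n" and "non_derogatory A"
  shows "\<exists>z. cyclic_vector A z"
proof -
  interpret fwd: field_hom "to_ring :: 'a \<Rightarrow> 'a field_as_ring"
    by (rule field_hom_to_ring)
  interpret bwd: field_hom "from_ring :: 'a field_as_ring \<Rightarrow> 'a"
    by (rule field_hom_from_ring)
  note ann = non_derogatory_char_poly_minimal(1)[OF A \<open>non_derogatory A\<close>]
  note minimal = non_derogatory_char_poly_minimal(2)[OF A \<open>non_derogatory A\<close>]
  define A' where "A' = map_mat to_ring A"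
  have A': "A' \<in> carrier_mat n n"
    unfolding A'_def using A by simp
  have A'_back: "map_mat from_ring A' = A"
    unfolding A'_def by (auto simp: field_as_ring_simps)
  have "map_poly to_ring (char_poly A) \<noteq> 0" "degree (map_poly to_ring (char_poly A)) = n"
    using degree_monic_char_poly[OF A] by auto
  moreover have "poly_mat (map_poly to_ring (char_poly A)) A' = 0\<^sub>m n n"
    unfolding A'_def fwd.poly_mat_hom[OF A] ann by auto
  moreover have "n \<le> degree q" if "q \<noteq> 0" "poly_mat q A' = 0\<^sub>m n n" for q
  proof -
    have "poly_mat (map_poly from_ring q) A = 0\<^sub>m n n"
      using bwd.poly_mat_hom[OF A'] that(2) A'_back by auto
    then show ?thesis
      using minimal[of "map_poly from_ring q"] that(1) by simp
  qed
  ultimately obtain z' where z': "cyclic_vector A' z'"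
    using cyclic_vector_exists_field_gcd[OF A'] by blast
  define z where "z = map_vec from_ring z'"
  have z'_carrier: "z' \<in> carrier_vec n"
    using z' A' unfolding cyclic_vector_def by simp
  then have "map_vec to_ring z = z'"
    unfolding z_def by (auto simp: field_as_ring_simps)
  then have "cyclic_vector A z"
    using fwd.cyclic_vector_of_hom[OF A] z' z'_carrier unfolding A'_def z_def by simp
  then show ?thesis ..
qed

section \<open>Newton bases\<close>

definition newton_poly :: "(nat \<Rightarrow> 'a::comm_ring_1) \<Rightarrow> nat \<Rightarrow> 'a poly" where
  "newton_poly \<mu> i = (\<Prod>j<i. [:- \<mu> j, 1:])"

lemma newton_poly_Suc: "newton_poly \<mu> (Suc i) = [:- \<mu> i, 1:] * newton_poly \<mu> i"
  unfolding newton_poly_def by simp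

lemma monic_newton_poly: "lead_coeff (newton_poly \<mu> i) = (1 :: 'a::idom)"
  unfolding newton_poly_def lead_coeff_prod by simp

lemma degree_newton_poly: "degree (newton_poly \<mu> i :: 'a::idom poly) = i"
  unfolding newton_poly_def by (subst degree_prod_eq_sum_degree) auto

lemma newton_poly_mult_vec_Suc:
  fixes A :: "'a::comm_ring_1 mat" and \<mu> :: "nat \<Rightarrow> 'a"
  assumes A: "A \<in> carrier_mat n n" and v: "v \<in> carrier_vec n"
  defines "f i \<equiv> poly_mat (newton_poly \<mu> i) A *\<^sub>v v"
  shows "A *\<^sub>v f i = f (Suc i) + \<mu> i \<cdot>\<^sub>v f i"
proof -
  have fi: "f i \<in> carrier_vec n"
    unfolding f_def by (rule mult_mat_vec_carrier[OF poly_mat_carrier[OF A] v])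
  have "f (Suc i) = ((- \<mu> i) \<cdot>\<^sub>m 1\<^sub>m n + A) *\<^sub>v f i"
    unfolding f_def newton_poly_Suc poly_mat_mult_vec[OF A v] poly_mat_linear[OF A] ..
  also have "\<dots> = ((- \<mu> i) \<cdot>\<^sub>m 1\<^sub>m n) *\<^sub>v f i + A *\<^sub>v f i"
    by (rule add_mult_distrib_mat_vec[OF _ A fi]) simp
  also have "((- \<mu> i) \<cdot>\<^sub>m 1\<^sub>m n) *\<^sub>v f i = (- \<mu> i) \<cdot>\<^sub>v f i"
    using fi by (intro eq_vecI) (auto simp: scalar_prod_smult_left)
  finally show ?thesis
    using A fi by (auto intro!: eq_vecI)
qed

definition bidiagonal_but_last :: "'a::zero_neq_one mat \<Rightarrow> (nat \<Rightarrow> 'a) \<Rightarrow> bool" where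
  "bidiagonal_but_last T \<mu> \<longleftrightarrow> (\<forall>r i. r < dim_row T \<longrightarrow> Suc i < dim_row T \<longrightarrow>
     T $$ (r, i) = (if r = i then \<mu> i else if r = Suc i then 1 else 0))"

lemma bidiagonal_but_last_conjugate:
  fixes A :: "'a::field mat"
  assumes A: "A \<in> carrier_mat n n" and P: "P \<in> carrier_mat n n" and P': "P' \<in> carrier_mat n n"
    and P'P: "P' * P = 1\<^sub>m n"
    and step: "\<And>i. Suc i < n \<Longrightarrow>
      A *\<^sub>v (P *\<^sub>v unit_vec n i) = P *\<^sub>v unit_vec n (Suc i) + \<mu> i \<cdot>\<^sub>v (P *\<^sub>v unit_vec n i)"
  shows "bidiagonal_but_last (P' * A * P) \<mu>"
proof -
  have P'_P: "P' *\<^sub>v (P *\<^sub>v unit_vec n i) = unit_vec n i" for i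
    unfolding assoc_mult_mat_vec[OF P' P unit_vec_carrier, symmetric] P'P by simp
  have "(P' * A * P) $$ (r, i) = (if r = i then \<mu> i else if r = Suc i then 1 else 0)"
    if r: "r < n" and i: "Suc i < n" for r i
  proof -
    have "P' * A * P *\<^sub>v unit_vec n i = P' *\<^sub>v (A *\<^sub>v (P *\<^sub>v unit_vec n i))"
      using P' A P by (simp add: assoc_mult_mat_vec[of _ n n _ n])
    also have "\<dots> = unit_vec n (Suc i) + \<mu> i \<cdot>\<^sub>v unit_vec n i"
      using P' P by (simp add: step[OF i] mult_add_distrib_mat_vec[OF P'] mult_mat_vec[OF P'] P'_P)
    finally show ?thesis
      using index_mult_unit_vec[of "P' * A * P" n n r i] P' A P r i by auto
  qed
  then show ?thesis
    unfolding bidiagonal_but_last_def using P' by simp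
qed

theorem cyclic_vector_imp_bidiagonal_but_last:
  fixes A :: "'a::field mat"
  assumes A: "A \<in> carrier_mat n n" and z: "cyclic_vector A z"
  shows "\<exists>P P'. P \<in> carrier_mat n n \<and> P' \<in> carrier_mat n n \<and> P * P' = 1\<^sub>m n \<and> P' * P = 1\<^sub>m n \<and>
    bidiagonal_but_last (P' * A * P) \<mu>"
proof -
  have zc: "z \<in> carrier_vec n"
    using z A unfolding cyclic_vector_def by simp
  define P where "P = poly_orbit_mat A z (newton_poly \<mu>)"
  have P: "P \<in> carrier_mat n n"
    using poly_orbit_mat_carrier[of A z] A unfolding P_def by simp
  have "det P \<noteq> 0"
    unfolding P_def using poly_orbit_mat_det_nonzero[OF A z] monic_newton_poly degree_newton_poly
    by (metis leading_coeff_0_iff zero_neq_one)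
  then obtain P' where P': "P' \<in> carrier_mat n n" and PP': "P * P' = 1\<^sub>m n" and P'P: "P' * P = 1\<^sub>m n"
    using det_nonzero_imp_inverse[OF P] by blast
  have "A *\<^sub>v (P *\<^sub>v unit_vec n i) = P *\<^sub>v unit_vec n (Suc i) + \<mu> i \<cdot>\<^sub>v (P *\<^sub>v unit_vec n i)"
    if "Suc i < n" for i
    using newton_poly_mult_vec_Suc[OF A zc, of \<mu> i] that
      poly_orbit_mat_mult_unit_vec[OF A zc, of i] poly_orbit_mat_mult_unit_vec[OF A zc, of "Suc i"]
    unfolding P_def by simp
  then have "bidiagonal_but_last (P' * A * P) \<mu>"
    by (rule bidiagonal_but_last_conjugate[OF A P P' P'P])
  then show ?thesis
    using P P' PP' P'P by blast
qed

lemma mat_trace_mult_comm: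
  fixes X :: "'a::comm_ring_1 mat"
  assumes X: "X \<in> carrier_mat n m" and Y: "Y \<in> carrier_mat m n"
  shows "mat_trace (X * Y) = mat_trace (Y * X)"
proof -
  have "mat_trace (X * Y) = (\<Sum>i<n. \<Sum>k<m. X $$ (i, k) * Y $$ (k, i))"
    unfolding mat_trace_def using X Y by (intro sum.cong) (auto simp: scalar_prod_def lessThan_atLeast0)
  also have "\<dots> = (\<Sum>k<m. \<Sum>i<n. Y $$ (k, i) * X $$ (i, k))"
    by (subst sum.swap) (simp add: mult.commute)
  also have "\<dots> = mat_trace (Y * X)"
    unfolding mat_trace_def using X Y by (intro sum.cong) (auto simp: scalar_prod_def lessThan_atLeast0)
  finally show ?thesis .
qed

lemma mat_trace_similar:
  fixes A :: "'a::comm_ring_1 mat"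
  assumes A: "A \<in> carrier_mat n n" and P: "P \<in> carrier_mat n n" and P': "P' \<in> carrier_mat n n"
    and "P * P' = 1\<^sub>m n"
  shows "mat_trace (P' * A * P) = mat_trace A"
proof -
  have "mat_trace (P' * A * P) = mat_trace (P * (P' * A))"
    using mat_trace_mult_comm[of "P' * A" n n P] P' A P by simp
  also have "P * (P' * A) = A"
    using assms by (simp add: assoc_mult_mat[symmetric, of P n n P' n A n])
  finally show ?thesis .
qed

lemma bidiagonal_but_last_diag:
  assumes "bidiagonal_but_last T \<mu>" and "Suc k < dim_row T"
  shows "T $$ (k, k) = \<mu> k"
  using assms unfolding bidiagonal_but_last_def by simp

lemma non_derogatory_newton_form:
  fixes A :: "'a::field mat" and \<mu> :: "nat \<Rightarrow> 'a"
  assumes A: "A \<in> carrier_mat n n" and nd: "non_derogatory A" and "0 < n"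
  obtains P P' where "P \<in> carrier_mat n n" "P' \<in> carrier_mat n n" "P * P' = 1\<^sub>m n" "P' * P = 1\<^sub>m n"
    "bidiagonal_but_last (P' * A * P) \<mu>" "(P' * A * P) $$ (n - 1, n - 1) = mat_trace A - (\<Sum>k<n - 1. \<mu> k)"
proof -
  obtain z where "cyclic_vector A z"
    using non_derogatory_imp_cyclic_vector[OF A nd] by blast
  then obtain P P' where P: "P \<in> carrier_mat n n" and P': "P' \<in> carrier_mat n n"
    and PP': "P * P' = 1\<^sub>m n" and P'P: "P' * P = 1\<^sub>m n" and shape: "bidiagonal_but_last (P' * A * P) \<mu>"
    using cyclic_vector_imp_bidiagonal_but_last[OF A] by blast
  define T where "T = P' * A * P"
  have T: "T \<in> carrier_mat n n"
    unfolding T_def using A P P' by simp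
  have "mat_trace A = mat_trace T"
    unfolding T_def by (rule mat_trace_similar[OF A P P' PP', symmetric])
  also have "\<dots> = (\<Sum>k<n. T $$ (k, k))"
    using T unfolding mat_trace_def by simp
  also have "\<dots> = (\<Sum>k<n - 1. T $$ (k, k)) + T $$ (n - 1, n - 1)"
    using \<open>0 < n\<close> by (metis Suc_pred' sum.lessThan_Suc)
  also have "(\<Sum>k<n - 1. T $$ (k, k)) = (\<Sum>k<n - 1. \<mu> k)"
    using bidiagonal_but_last_diag[OF shape[folded T_def]] T by (intro sum.cong) auto
  finally have "T $$ (n - 1, n - 1) = mat_trace A - (\<Sum>k<n - 1. \<mu> k)"
    by simp
  then show ?thesis
    using that[OF P P' PP' P'P shape] unfolding T_def by blast
qed

section \<open>A square-zero perturbation with a basis of eigenvectors\<close>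

lemma sum_lessThan_eq_single:
  assumes "r < (n::nat)" and "\<And>k. k < n \<Longrightarrow> k \<noteq> r \<Longrightarrow> f k = 0"
  shows "(\<Sum>k<n. f k) = f r"
proof -
  have "sum f {r} = sum f {..<n}"
    by (rule sum.mono_neutral_left) (use assms in auto)
  then show ?thesis
    by simp
qed

lemma generalized_eigenvector_step:
  fixes D :: "'a::field mat"
  assumes D: "D \<in> carrier_mat n n" and u: "u \<in> carrier_vec n" and v: "v \<in> carrier_vec n"
    and Du: "D *\<^sub>v u = \<alpha> \<cdot>\<^sub>v u + v" and Dv: "D *\<^sub>v v = \<beta> \<cdot>\<^sub>v v" and "\<alpha> \<noteq> \<beta>"
  shows "D *\<^sub>v (u + (1 / (\<alpha> - \<beta>)) \<cdot>\<^sub>v v) = \<alpha> \<cdot>\<^sub>v (u + (1 / (\<alpha> - \<beta>)) \<cdot>\<^sub>v v)"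
proof -
  have "D *\<^sub>v (u + (1 / (\<alpha> - \<beta>)) \<cdot>\<^sub>v v) = \<alpha> \<cdot>\<^sub>v u + v + (1 / (\<alpha> - \<beta>)) \<cdot>\<^sub>v (\<beta> \<cdot>\<^sub>v v)"
    using D u v by (simp add: mult_add_distrib_mat_vec mult_mat_vec Du Dv)
  also have "\<dots> = \<alpha> \<cdot>\<^sub>v (u + (1 / (\<alpha> - \<beta>)) \<cdot>\<^sub>v v)"
    using u v \<open>\<alpha> \<noteq> \<beta>\<close> by (intro eq_vecI) (simp_all add: field_simps)
  finally show ?thesis .
qed

text \<open>
  The positions \<open>k\<close> with \<open>J k\<close> carry the diagonal entry \<open>w\<close>. The square-zero part cancels the
  subdiagonal entries of these columns and, in the last column, every entry outside the rows in
  \<open>J\<close> and the last row; its nonzero rows avoid \<open>J \<union> {n - 1}\<close> while its nonzero columns lie in it,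
  whence it squares to zero. Every other column \<open>k < n - 2\<close> is followed by one in \<open>J\<close>, so
  \<open>T + square_zero_part\<close> consists of the blocks \<open>[[\<mu> k, 0], [1, w]]\<close> coupled only through the last
  column, and its eigenvectors can be written down.
\<close>

context
  fixes n :: nat and T :: "'a::field mat" and \<mu> :: "nat \<Rightarrow> 'a" and J :: "nat \<Rightarrow> bool" and w :: 'a
  assumes n2: "2 \<le> n" and T: "T \<in> carrier_mat n n" and T_shape: "bidiagonal_but_last T \<mu>"
    and J_le: "\<And>k. J k \<Longrightarrow> k + 3 \<le> n"
    and J_Suc: "\<And>k. J k \<Longrightarrow> \<not> J (Suc k)"
    and not_J_Suc: "\<And>k. k + 3 \<le> n \<Longrightarrow> \<not> J k \<Longrightarrow> J (Suc k)"
    and \<mu>_J: "\<And>k. J k \<Longrightarrow> \<mu> k = w"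
    and \<mu>_not_J: "\<And>k. Suc k < n \<Longrightarrow> \<not> J k \<Longrightarrow> \<mu> k \<noteq> w"
    and last_ne_w: "T $$ (n - 1, n - 1) \<noteq> w"
    and last_ne_pen: "T $$ (n - 1, n - 1) \<noteq> \<mu> (n - 2)"
begin

lemma T_entry:
  "r < n \<Longrightarrow> Suc i < n \<Longrightarrow> T $$ (r, i) = (if r = i then \<mu> i else if r = Suc i then 1 else 0)"
  using T_shape T unfolding bidiagonal_but_last_def by simp

definition square_zero_part :: "'a mat" where
  "square_zero_part = mat n n (\<lambda>(r, k). if J k \<and> r = Suc k then - 1
     else if k = n - 1 \<and> \<not> J r \<and> r \<noteq> n - 1 then - T $$ (r, n - 1) else 0)"

definition last_col_J :: "'a vec" where
  "last_col_J = vec n (\<lambda>r. if J r then T $$ (r, n - 1) else 0)"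

lemma square_zero_part_carrier: "square_zero_part \<in> carrier_mat n n"
  unfolding square_zero_part_def by simp

lemma last_col_J_carrier: "last_col_J \<in> carrier_vec n"
  unfolding last_col_J_def by simp

lemma square_zero_part_square: "square_zero_part * square_zero_part = 0\<^sub>m n n"
proof (rule eq_matI)
  fix r k
  assume "r < dim_row (0\<^sub>m n n :: 'a mat)" "k < dim_col (0\<^sub>m n n :: 'a mat)"
  then have r: "r < n" and k: "k < n"
    by auto
  have "square_zero_part $$ (r, m) * square_zero_part $$ (m, k) = 0" if "m < n" for m
  proof (cases "square_zero_part $$ (m, k) = 0")
    case False
    then have "\<not> J m \<and> m \<noteq> n - 1"
      using that k unfolding square_zero_part_def by (auto split: if_splits dest: J_le J_Suc)
    then show ?thesis
      using r that unfolding square_zero_part_def by simp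
  qed simp
  then show "(square_zero_part * square_zero_part) $$ (r, k) = 0\<^sub>m n n $$ (r, k)"
    using r k square_zero_part_carrier by (simp add: scalar_prod_def sum.neutral)
qed (use square_zero_part_carrier in auto)

lemma perturbed_entry:
  assumes "r < n" "k < n"
  shows "((T + square_zero_part) *\<^sub>v unit_vec n k) $ r = T $$ (r, k) + square_zero_part $$ (r, k)"
  using index_mult_unit_vec[of "T + square_zero_part" n n r k] assms T square_zero_part_carrier by simp

lemma perturbed_mult_unit_vec_J:
  assumes "J k"
  shows "(T + square_zero_part) *\<^sub>v unit_vec n k = w \<cdot>\<^sub>v unit_vec n k"
  using J_le[OF assms] perturbed_entry T_entry \<mu>_J[OF assms] assms T square_zero_part_carrier
  by (intro eq_vecI) (auto simp: square_zero_part_def)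

lemma perturbed_mult_unit_vec_not_J:
  assumes "\<not> J k" "Suc k < n"
  shows "(T + square_zero_part) *\<^sub>v unit_vec n k = \<mu> k \<cdot>\<^sub>v unit_vec n k + unit_vec n (Suc k)"
  using perturbed_entry T_entry assms T square_zero_part_carrier
  by (intro eq_vecI) (auto simp: square_zero_part_def)

lemma perturbed_mult_unit_vec_last:
  "(T + square_zero_part) *\<^sub>v unit_vec n (n - 1) = T $$ (n - 1, n - 1) \<cdot>\<^sub>v unit_vec n (n - 1) + last_col_J"
  using perturbed_entry n2 J_le T square_zero_part_carrier
  by (intro eq_vecI) (force simp: square_zero_part_def last_col_J_def)+

lemma perturbed_entry_J:
  assumes "J m" "r < n"
  shows "(T + square_zero_part) $$ (r, m) = (if r = m then w else 0)"
  using J_le[OF assms(1)] T_entry[of r m] \<mu>_J[OF assms(1)] assms T square_zero_part_carrier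
  by (auto simp: square_zero_part_def)

lemma perturbed_mult_last_col_J: "(T + square_zero_part) *\<^sub>v last_col_J = w \<cdot>\<^sub>v last_col_J"
proof (rule eq_vecI)
  fix r
  assume "r < dim_vec (w \<cdot>\<^sub>v last_col_J)"
  then have r: "r < n"
    unfolding last_col_J_def by simp
  have "(T + square_zero_part) $$ (r, m) * last_col_J $ m = (if m = r then w * last_col_J $ r else 0)"
    if "m < n" for m
    using perturbed_entry_J[OF _ r, of m] that r by (cases "J m") (auto simp: last_col_J_def)
  then show "((T + square_zero_part) *\<^sub>v last_col_J) $ r = (w \<cdot>\<^sub>v last_col_J) $ r"
    using r T square_zero_part_carrier by (simp add: scalar_prod_def last_col_J_def)
qed (use T square_zero_part_carrier in \<open>simp add: last_col_J_def\<close>)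

definition eigvec :: "nat \<Rightarrow> 'a vec" where
  "eigvec k =
    (if J k then unit_vec n k
     else if k + 2 < n then unit_vec n k + (1 / (\<mu> k - w)) \<cdot>\<^sub>v unit_vec n (Suc k)
     else if k = n - 2 then unit_vec n k + (1 / (\<mu> k - T $$ (n - 1, n - 1))) \<cdot>\<^sub>v unit_vec n (n - 1)
       + (1 / ((\<mu> k - T $$ (n - 1, n - 1)) * (\<mu> k - w))) \<cdot>\<^sub>v last_col_J
     else unit_vec n k + (1 / (T $$ (n - 1, n - 1) - w)) \<cdot>\<^sub>v last_col_J)"

lemma eigvec_carrier: "eigvec k \<in> carrier_vec n"
  unfolding eigvec_def using last_col_J_carrier by simp

lemma not_J_pen: "\<not> J (n - 2)" and not_J_last: "\<not> J (n - 1)"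
  using J_le n2 by force+

lemma eigvec_J: "J k \<Longrightarrow> eigvec k = unit_vec n k"
  unfolding eigvec_def by simp

lemma eigvec_pair:
  "\<not> J k \<Longrightarrow> k + 2 < n \<Longrightarrow> eigvec k = unit_vec n k + (1 / (\<mu> k - w)) \<cdot>\<^sub>v unit_vec n (Suc k)"
  unfolding eigvec_def by simp

lemma eigvec_pen:
  "eigvec (n - 2) = unit_vec n (n - 2) + (1 / (\<mu> (n - 2) - T $$ (n - 1, n - 1))) \<cdot>\<^sub>v unit_vec n (n - 1)
     + (1 / ((\<mu> (n - 2) - T $$ (n - 1, n - 1)) * (\<mu> (n - 2) - w))) \<cdot>\<^sub>v last_col_J"
proof -
  have "\<not> n - 2 + 2 < n"
    by simp
  then show ?thesis
    unfolding eigvec_def using not_J_pen by (simp only: if_False if_True simp_thms)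
qed

lemma eigvec_last: "eigvec (n - 1) = unit_vec n (n - 1) + (1 / (T $$ (n - 1, n - 1) - w)) \<cdot>\<^sub>v last_col_J"
proof -
  have "\<not> n - 1 + 2 < n" "(n - 1 = n - 2) = False"
    using n2 by auto
  then show ?thesis
    unfolding eigvec_def using not_J_last by (simp only: if_False simp_thms)
qed

lemma perturbed_mult_eigvec_pen:
  "(T + square_zero_part) *\<^sub>v eigvec (n - 2) = \<mu> (n - 2) \<cdot>\<^sub>v eigvec (n - 2)"
proof -
  let ?l = "\<mu> (n - 2)" and ?\<delta> = "T $$ (n - 1, n - 1)"
  let ?e = "unit_vec n (n - 2)" and ?e' = "unit_vec n (n - 1)"
  define a where "a = 1 / (?l - ?\<delta>)"
  define b where "b = 1 / ((?l - ?\<delta>) * (?l - w))"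
  have D: "T + square_zero_part \<in> carrier_mat n n"
    using T square_zero_part_carrier by simp
  have l_ne: "?l \<noteq> ?\<delta>" "?l \<noteq> w"
    using last_ne_pen \<mu>_not_J[of "n - 2"] not_J_pen n2 by auto
  have n_pen: "Suc (n - 2) = n - 1" "Suc (n - 2) < n"
    using n2 by auto
  have la: "?l * a = 1 + a * ?\<delta>"
    using l_ne unfolding a_def by (simp add: field_simps)
  have "b = a / (?l - w)"
    unfolding a_def b_def by simp
  then have lb: "?l * b = a + b * w"
    using l_ne by (simp add: field_simps)
  have "(T + square_zero_part) *\<^sub>v eigvec (n - 2)
      = ?l \<cdot>\<^sub>v ?e + ?e' + a \<cdot>\<^sub>v (?\<delta> \<cdot>\<^sub>v ?e' + last_col_J) + b \<cdot>\<^sub>v (w \<cdot>\<^sub>v last_col_J)"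
    using D last_col_J_carrier perturbed_mult_unit_vec_not_J[OF not_J_pen n_pen(2)] n_pen(1)
      perturbed_mult_unit_vec_last perturbed_mult_last_col_J
    unfolding eigvec_pen a_def[symmetric] b_def[symmetric] by (simp add: mult_add_distrib_mat_vec mult_mat_vec)
  also have "\<dots> = ?l \<cdot>\<^sub>v ?e + (?l * a) \<cdot>\<^sub>v ?e' + (?l * b) \<cdot>\<^sub>v last_col_J"
    unfolding la lb using last_col_J_carrier by (intro eq_vecI) (simp_all add: algebra_simps)
  also have "\<dots> = ?l \<cdot>\<^sub>v eigvec (n - 2)"
    unfolding eigvec_pen a_def[symmetric] b_def[symmetric]
    using last_col_J_carrier by (intro eq_vecI) (simp_all add: algebra_simps)
  finally show ?thesis .
qed

lemma perturbed_mult_eigvec: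
  assumes "k < n"
  shows "(T + square_zero_part) *\<^sub>v eigvec k = T $$ (k, k) \<cdot>\<^sub>v eigvec k"
proof -
  have D: "T + square_zero_part \<in> carrier_mat n n"
    using T square_zero_part_carrier by simp
  consider "J k" | "\<not> J k" "k + 2 < n" | "k = n - 2" | "k = n - 1"
    using assms by linarith
  then show ?thesis
  proof cases
    case 1
    then show ?thesis
      using J_le[OF 1] T_entry[of k k] \<mu>_J[OF 1] perturbed_mult_unit_vec_J[OF 1]
      unfolding eigvec_J[OF 1] by simp
  next
    case 2
    have "\<mu> k \<noteq> w" "J (Suc k)"
      using \<mu>_not_J[of k] not_J_Suc[of k] 2 by auto
    then show ?thesis
      using generalized_eigenvector_step[OF D unit_vec_carrier unit_vec_carrier
          perturbed_mult_unit_vec_not_J[of k] perturbed_mult_unit_vec_J[of "Suc k"]] 2 T_entry[of k k]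
      unfolding eigvec_pair[OF 2] by simp
  next
    case 3
    then show ?thesis
      using perturbed_mult_eigvec_pen T_entry[of "n - 2" "n - 2"] n2 by simp
  next
    case 4
    then show ?thesis
      using generalized_eigenvector_step[OF D unit_vec_carrier last_col_J_carrier
          perturbed_mult_unit_vec_last perturbed_mult_last_col_J last_ne_w]
      unfolding 4 eigvec_last by simp
  qed
qed

definition eigvec_mat :: "'a mat" where
  "eigvec_mat = mat n n (\<lambda>(r, k). eigvec k $ r)"

lemma eigvec_mat_carrier: "eigvec_mat \<in> carrier_mat n n"
  unfolding eigvec_mat_def by simp

lemma perturbed_mult_eigvec_mat:
  "(T + square_zero_part) * eigvec_mat = eigvec_mat * mat_diag n (\<lambda>k. T $$ (k, k))"
proof (rule eq_matI)
  fix r k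
  assume "r < dim_row (eigvec_mat * mat_diag n (\<lambda>k. T $$ (k, k)))"
    "k < dim_col (eigvec_mat * mat_diag n (\<lambda>k. T $$ (k, k)))"
  then have r: "r < n" and k: "k < n"
    using eigvec_mat_carrier by (auto simp: mat_diag_def)
  have "dim_vec (eigvec k) = n"
    using eigvec_carrier[of k] by simp
  then have "col eigvec_mat k = eigvec k"
    using k unfolding eigvec_mat_def by (intro eq_vecI) simp_all
  then have "((T + square_zero_part) * eigvec_mat) $$ (r, k) = ((T + square_zero_part) *\<^sub>v eigvec k) $ r"
    using r k T square_zero_part_carrier eigvec_mat_carrier by simp
  also have "\<dots> = eigvec_mat $$ (r, k) * T $$ (k, k)"
    using perturbed_mult_eigvec[OF k] r k eigvec_carrier[of k] unfolding eigvec_mat_def by simp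
  finally show "((T + square_zero_part) * eigvec_mat) $$ (r, k) = (eigvec_mat * mat_diag n (\<lambda>k. T $$ (k, k))) $$ (r, k)"
    using r k eigvec_mat_carrier by (simp add: mat_diag_mult_right)
qed (use T square_zero_part_carrier eigvec_mat_carrier in \<open>auto simp: mat_diag_def\<close>)

lemma eigvec_entry_not_J_row:
  assumes "r < n - 1" "\<not> J r" "k < n"
  shows "eigvec k $ r = (if k = r then 1 else 0)"
proof -
  consider "J k" | "\<not> J k" "k + 2 < n" | "k = n - 2" | "k = n - 1"
    using assms(3) by linarith
  then show ?thesis
  proof cases
    case 1
    then show ?thesis
      using assms by (auto simp: eigvec_J)
  next
    case 2
    then have "r \<noteq> Suc k"
      using not_J_Suc[of k] assms(2) by auto
    then show ?thesis
      using 2 assms by (auto simp: eigvec_pair)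
  next
    case 3
    then show ?thesis
      using assms last_col_J_carrier by (auto simp: eigvec_pen last_col_J_def)
  next
    case 4
    then show ?thesis
      using assms last_col_J_carrier eigvec_last by (auto simp: last_col_J_def)
  qed
qed

lemma eigvec_entry_last_row:
  assumes "k < n - 2"
  shows "eigvec k $ (n - 1) = 0"
  using assms by (cases "J k") (auto simp: eigvec_J eigvec_pair)

lemma eigvec_mat_det: "det eigvec_mat \<noteq> 0"
proof
  assume "det eigvec_mat = 0"
  then obtain c where c: "c \<in> carrier_vec n" "c \<noteq> 0\<^sub>v n" and Qc: "eigvec_mat *\<^sub>v c = 0\<^sub>v n"
    unfolding det_0_iff_vec_prod_zero[OF eigvec_mat_carrier] by blast
  have row: "(\<Sum>k<n. eigvec k $ r * c $ k) = 0" if "r < n" for r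
    using arg_cong[OF Qc, of "\<lambda>v. v $ r"] that c
    by (simp add: eigvec_mat_def scalar_prod_def lessThan_atLeast0)
  have c_low: "c $ r = 0" if "r < n - 1" "\<not> J r" for r
  proof -
    have "(\<Sum>k<n. eigvec k $ r * c $ k) = eigvec r $ r * c $ r"
      by (rule sum_lessThan_eq_single) (use that eigvec_entry_not_J_row[OF that] in auto)
    then show ?thesis
      using row[of r] eigvec_entry_not_J_row[OF that, of r] that by simp
  qed
  have "eigvec k $ (n - 1) * c $ k = 0" if "k < n" "k \<noteq> n - 1" for k
    using c_low[OF _ not_J_pen] eigvec_entry_last_row[of k] that n2 by (cases "k = n - 2") auto
  then have "(\<Sum>k<n. eigvec k $ (n - 1) * c $ k) = eigvec (n - 1) $ (n - 1) * c $ (n - 1)"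
    using n2 by (intro sum_lessThan_eq_single) auto
  moreover have "eigvec (n - 1) $ (n - 1) = 1"
    using eigvec_last last_col_J_carrier not_J_last n2 by (simp add: last_col_J_def)
  ultimately have "c $ (n - 1) = 0"
    using row[of "n - 1"] n2 by simp
  then have c_not_J: "c $ k = 0" if "k < n" "\<not> J k" for k
    using c_low that by (cases "k = n - 1") auto
  have c_J: "c $ r = 0" if "J r" for r
  proof -
    have "eigvec k $ r * c $ k = 0" if "k < n" "k \<noteq> r" for k
      using c_not_J[of k] eigvec_J[of k] J_le[OF \<open>J r\<close>] that by (cases "J k") auto
    then have "(\<Sum>k<n. eigvec k $ r * c $ k) = eigvec r $ r * c $ r"
      using J_le[OF that] by (intro sum_lessThan_eq_single) auto
    then show ?thesis
      using row[of r] J_le[OF that] eigvec_J[OF that] by simp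
  qed
  have "c $ i = 0" if "i < n" for i
    using c_J c_not_J[OF that] by (cases "J i") auto
  then have "c = 0\<^sub>v n"
    using c(1) by (intro eq_vecI) auto
  with c(2) show False ..
qed

lemma square_zero_part_diagonalizes:
  obtains N Q Q' where "N \<in> carrier_mat n n" "Q \<in> carrier_mat n n" "Q' \<in> carrier_mat n n"
    "N * N = 0\<^sub>m n n" "Q * Q' = 1\<^sub>m n" "Q' * Q = 1\<^sub>m n" "T + N = Q * mat_diag n (\<lambda>k. T $$ (k, k)) * Q'"
proof -
  obtain Qi where Qi: "Qi \<in> carrier_mat n n" and QQi: "eigvec_mat * Qi = 1\<^sub>m n" and QiQ: "Qi * eigvec_mat = 1\<^sub>m n"
    using det_nonzero_imp_inverse[OF eigvec_mat_carrier eigvec_mat_det] by blast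
  have D: "T + square_zero_part \<in> carrier_mat n n"
    using T square_zero_part_carrier by simp
  have "T + square_zero_part = (T + square_zero_part) * eigvec_mat * Qi"
    by (simp add: assoc_mult_mat[OF D eigvec_mat_carrier Qi] QQi right_mult_one_mat[OF D])
  also have "\<dots> = eigvec_mat * mat_diag n (\<lambda>k. T $$ (k, k)) * Qi"
    unfolding perturbed_mult_eigvec_mat ..
  finally show ?thesis
    by (rule that[OF square_zero_part_carrier eigvec_mat_carrier Qi square_zero_part_square QQi QiQ])
qed

end

section \<open>Prescribing the spectrum\<close>

lemma diagonalizable_and_eigenvalues:
  fixes X :: "'a::field mat"
  assumes X: "X \<in> carrier_mat n n" and U: "U \<in> carrier_mat n n" and V: "V \<in> carrier_mat n n"
    and UV: "U * V = 1\<^sub>m n" and VU: "V * U = 1\<^sub>m n" and XL: "X = U * mat_diag n f * V"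
  shows "diagonalizable X" and "{k. eigenvalue X k} = f ` {..<n}"
proof -
  let ?L = "mat_diag n f"
  have "V * X * U = (V * U) * ?L * (V * U)"
    unfolding XL using U V by (simp add: assoc_mult_mat[of _ n n _ n _ n] mult_carrier_mat[of _ n n _ n])
  then have "V * X * U = ?L"
    unfolding VU by (simp add: left_mult_one_mat[OF mat_diag_dim] right_mult_one_mat[OF mat_diag_dim])
  then have "diagonal_mat (V * X * U)"
    by (simp add: diagonal_mat_def mat_diag_def)
  moreover have "dim_row X = n"
    using X by simp
  ultimately show "diagonalizable X"
    unfolding diagonalizable_def using X U V UV VU by blast
  have sim: "similar_mat X ?L"
    unfolding similar_mat_def similar_mat_wit_def using X U V UV VU XL by auto
  have "eigenvalue X k \<longleftrightarrow> poly (char_poly ?L) k = 0" for k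
    unfolding eigenvalue_root_char_poly[OF X] char_poly_similar[OF sim] ..
  moreover have "diag_mat ?L = map f [0..<n]"
    by (auto simp: mat_diag_def diag_mat_def intro: nth_equalityI)
  then have "char_poly ?L = (\<Prod>a\<leftarrow>map f [0..<n]. [:- a, 1:])"
    using char_poly_upper_triangular[OF mat_diag_dim[of n f]] by (simp add: upper_triangular_def mat_diag_def)
  ultimately show "{k. eigenvalue X k} = f ` {..<n}"
    by (auto simp: poly_prod_list_zero_iff)
qed

lemma conjugate_square_zero_diagonalization:
  fixes A :: "'a::field mat"
  assumes A: "A \<in> carrier_mat n n" and P: "P \<in> carrier_mat n n" and P': "P' \<in> carrier_mat n n"
    and PP': "P * P' = 1\<^sub>m n" and P'P: "P' * P = 1\<^sub>m n"
    and N: "N \<in> carrier_mat n n" and NN: "N * N = 0\<^sub>m n n"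
    and Q: "Q \<in> carrier_mat n n" and Q': "Q' \<in> carrier_mat n n"
    and QQ': "Q * Q' = 1\<^sub>m n" and Q'Q: "Q' * Q = 1\<^sub>m n"
    and diag: "P' * A * P + N = Q * mat_diag n f * Q'"
  shows "\<exists>M \<in> carrier_mat n n. M * M = 0\<^sub>m n n \<and> diagonalizable (A + M) \<and>
    {k. eigenvalue (A + M) k} = f ` {..<n}"
proof (intro bexI conjI)
  note assoc = assoc_mult_mat[of _ n n _ n _ n] mult_carrier_mat[of _ n n _ n]
  have "P * N * P' * (P * N * P') = P * (N * (P' * P) * N) * P'"
    using P N P' by (simp add: assoc)
  also have "\<dots> = 0\<^sub>m n n"
    using assms by (simp add: right_mult_one_mat[OF N])
  finally show "P * N * P' * (P * N * P') = 0\<^sub>m n n" .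
  have "P * (P' * A * P) * P' = (P * P') * A * (P * P')"
    using A P P' by (simp add: assoc)
  then have A_eq: "P * (P' * A * P) * P' = A"
    using assms by simp
  have S: "P' * A * P \<in> carrier_mat n n"
    using A P P' by simp
  have "P * (P' * A * P + N) * P' = P * (P' * A * P) * P' + P * N * P'"
    unfolding mult_add_distrib_mat[OF P S N]
    by (rule add_mult_distrib_mat[OF mult_carrier_mat[OF P S] mult_carrier_mat[OF P N] P'])
  then have "A + P * N * P' = P * (Q * mat_diag n f * Q') * P'"
    unfolding A_eq diag by simp
  then have X: "A + P * N * P' = (P * Q) * mat_diag n f * (Q' * P')"
    using P P' Q Q' by (simp add: assoc)
  have "(P * Q) * (Q' * P') = P * (Q * Q') * P'" "(Q' * P') * (P * Q) = Q' * (P' * P) * Q"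
    using P P' Q Q' by (simp_all add: assoc)
  then have "(P * Q) * (Q' * P') = 1\<^sub>m n" "(Q' * P') * (P * Q) = 1\<^sub>m n"
    using assms by simp_all
  note diagonal = diagonalizable_and_eigenvalues[OF _ _ _ this X]
  show "diagonalizable (A + P * N * P')" "{k. eigenvalue (A + P * N * P') k} = f ` {..<n}"
    using diagonal A P P' N Q Q' by simp_all
  show "P * N * P' \<in> carrier_mat n n"
    using P P' N by simp
qed

theorem non_derogatory_square_zero_perturbation:
  fixes A :: "'a::field mat" and \<mu> :: "nat \<Rightarrow> 'a"
  assumes A: "A \<in> carrier_mat n n" and nd: "non_derogatory A" and n2: "2 \<le> n"
    and J_le: "\<And>k. J k \<Longrightarrow> k + 3 \<le> n"
    and J_Suc: "\<And>k. J k \<Longrightarrow> \<not> J (Suc k)"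
    and not_J_Suc: "\<And>k. k + 3 \<le> n \<Longrightarrow> \<not> J k \<Longrightarrow> J (Suc k)"
    and \<mu>_J: "\<And>k. J k \<Longrightarrow> \<mu> k = w"
    and \<mu>_not_J: "\<And>k. Suc k < n \<Longrightarrow> \<not> J k \<Longrightarrow> \<mu> k \<noteq> w"
    and last_ne: "mat_trace A - (\<Sum>k<n - 1. \<mu> k) \<noteq> w" "mat_trace A - (\<Sum>k<n - 1. \<mu> k) \<noteq> \<mu> (n - 2)"
  shows "\<exists>M \<in> carrier_mat n n. M * M = 0\<^sub>m n n \<and> diagonalizable (A + M) \<and>
    {k. eigenvalue (A + M) k} = insert (mat_trace A - (\<Sum>k<n - 1. \<mu> k)) (\<mu> ` {..<n - 1})"
proof -
  obtain P P' where P: "P \<in> carrier_mat n n" and P': "P' \<in> carrier_mat n n"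
    and PP': "P * P' = 1\<^sub>m n" and P'P: "P' * P = 1\<^sub>m n" and shape: "bidiagonal_but_last (P' * A * P) \<mu>"
    and last: "(P' * A * P) $$ (n - 1, n - 1) = mat_trace A - (\<Sum>k<n - 1. \<mu> k)"
    using non_derogatory_newton_form[OF A nd, of \<mu>] n2 by auto
  define T where "T = P' * A * P"
  have T: "T \<in> carrier_mat n n"
    unfolding T_def using A P P' by simp
  have diag: "T $$ (k, k) = \<mu> k" if "k < n - 1" for k
    using bidiagonal_but_last_diag[OF shape[folded T_def]] T that by simp
  have "T $$ (n - 1, n - 1) \<noteq> w" "T $$ (n - 1, n - 1) \<noteq> \<mu> (n - 2)"
    using last_ne unfolding T_def last .
  then obtain N Q Q' where N: "N \<in> carrier_mat n n" and Q: "Q \<in> carrier_mat n n" and Q': "Q' \<in> carrier_mat n n"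
    and NN: "N * N = 0\<^sub>m n n" and QQ': "Q * Q' = 1\<^sub>m n" and Q'Q: "Q' * Q = 1\<^sub>m n"
    and TN: "T + N = Q * mat_diag n (\<lambda>k. T $$ (k, k)) * Q'"
    using square_zero_part_diagonalizes[of n T \<mu> J w, OF n2 T shape[folded T_def] J_le J_Suc not_J_Suc \<mu>_J \<mu>_not_J]
    by blast
  have "{..<n} = insert (n - 1) {..<n - 1}"
    using n2 by auto
  moreover have "(\<lambda>k. T $$ (k, k)) ` {..<n - 1} = \<mu> ` {..<n - 1}"
    by (rule image_cong) (simp_all add: diag)
  ultimately have "(\<lambda>k. T $$ (k, k)) ` {..<n} = insert (mat_trace A - (\<Sum>k<n - 1. \<mu> k)) (\<mu> ` {..<n - 1})"
    using last[folded T_def] by simp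
  then show ?thesis
    using conjugate_square_zero_diagonalization[OF A P P' PP' P'P N NN Q Q' QQ' Q'Q TN[unfolded T_def], folded T_def]
    by simp
qed

text \<open>
  The diagonal entry of the Newton form at position \<open>n - d\<close>: \<open>w\<close> at odd \<open>d\<close> (the positions in \<open>J\<close>),
  and \<open>l, x, -w, -w, \<dots>\<close> at \<open>d = 2, 4, 6, 8, \<dots>\<close>. Each \<open>-w\<close> cancels the preceding \<open>w\<close>, so the
  sum stays \<open>l + x + w\<close>, or \<open>l + x + 2 w\<close> for odd \<open>n\<close>.
\<close>

definition spectrum_pattern :: "'a::uminus \<Rightarrow> 'a \<Rightarrow> 'a \<Rightarrow> nat \<Rightarrow> 'a" where
  "spectrum_pattern l w x d = (if d = 2 then l else if odd d then w else if d = 4 then x else - w)"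

lemma spectrum_pattern_sum_upto:
  fixes l w x :: "'a::ab_group_add"
  assumes "2 \<le> m"
  shows "(\<Sum>d = 2..m. spectrum_pattern l w x d) = l + (if odd m then w else 0) + (if 4 \<le> m then x + w else 0)"
  using assms
proof (induct m rule: dec_induct)
  case base
  then show ?case
    by (simp add: spectrum_pattern_def)
next
  case (step m)
  have split: "(\<Sum>d = 2..Suc m. spectrum_pattern l w x d)
      = (\<Sum>d = 2..m. spectrum_pattern l w x d) + spectrum_pattern l w x (Suc m)"
    using step(1) by (simp add: sum.cl_ivl_Suc)
  consider "m = 2" | "m = 3" | "4 \<le> m" "odd m" | "4 \<le> m" "even m"
    using step(1) by linarith
  then show ?case
    using split step(3) by cases (simp_all add: spectrum_pattern_def)
qed

lemma spectrum_pattern_sum: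
  fixes l w x :: "'a::ab_group_add"
  assumes "4 \<le> n"
  shows "(\<Sum>k<n - 1. spectrum_pattern l w x (n - k)) = l + (if odd n then w else 0) + (x + w)"
proof -
  have "(\<Sum>k<n - 1. spectrum_pattern l w x (n - k)) = (\<Sum>d = 2..n. spectrum_pattern l w x d)"
    by (rule sum.reindex_bij_witness[of _ "\<lambda>d. n - d" "\<lambda>k. n - k"]) (use assms in auto)
  then show ?thesis
    using spectrum_pattern_sum_upto[of n l w x] assms by simp
qed

lemma spectrum_pattern_image:
  assumes "4 \<le> n"
  shows "(\<lambda>k. spectrum_pattern l w x (n - k)) ` {..<n - 1} = {l, w, x} \<union> (if 6 \<le> n then {- w} else {})"
proof -
  let ?f = "spectrum_pattern l w x"
  have "(\<lambda>k. n - k) ` {..<n - 1} = {2..n}"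
  proof
    show "{2..n} \<subseteq> (\<lambda>k. n - k) ` {..<n - 1}"
    proof
      fix d
      assume "d \<in> {2..n}"
      then have "d = n - (n - d)" "n - d < n - 1"
        by auto
      then show "d \<in> (\<lambda>k. n - k) ` {..<n - 1}"
        by blast
    qed
  qed auto
  then have "(\<lambda>k. ?f (n - k)) ` {..<n - 1} = ?f ` {2..n}"
    by (metis image_image)
  also have "\<dots> = {l, w, x} \<union> (if 6 \<le> n then {- w} else {})"
  proof
    show "?f ` {2..n} \<subseteq> {l, w, x} \<union> (if 6 \<le> n then {- w} else {})"
    proof
      fix y
      assume "y \<in> ?f ` {2..n}"
      then obtain d where d: "2 \<le> d" "d \<le> n" and y: "y = ?f d"
        by auto
      have "d = 2 \<or> odd d \<or> d = 4 \<or> 6 \<le> d"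
        using d(1) by presburger
      then show "y \<in> {l, w, x} \<union> (if 6 \<le> n then {- w} else {})"
        using d y by (elim disjE) (simp_all add: spectrum_pattern_def)
    qed
    have "?f 2 \<in> ?f ` {2..n}" "?f 3 \<in> ?f ` {2..n}" "?f 4 \<in> ?f ` {2..n}"
      and "6 \<le> n \<Longrightarrow> ?f 6 \<in> ?f ` {2..n}"
      using assms by auto
    moreover have "?f 2 = l" "?f 3 = w" "?f 4 = x" "?f 6 = - w"
      by (simp_all add: spectrum_pattern_def)
    ultimately show "{l, w, x} \<union> (if 6 \<le> n then {- w} else {}) \<subseteq> ?f ` {2..n}"
      by auto
  qed
  finally show ?thesis .
qed

theorem non_derogatory_pattern_perturbation:
  fixes A :: "'a::field mat"
  assumes A: "A \<in> carrier_mat n n" and nd: "non_derogatory A" and n4: "4 \<le> n"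
    and "- w \<noteq> w" "l \<noteq> w" "x \<noteq> w"
    and last_ne: "mat_trace A - (l + (if odd n then w else 0) + (x + w)) \<notin> {w, l}"
  shows "\<exists>M \<in> carrier_mat n n. M * M = 0\<^sub>m n n \<and> diagonalizable (A + M) \<and>
    {k. eigenvalue (A + M) k} =
      insert (mat_trace A - (l + (if odd n then w else 0) + (x + w))) ({l, w, x} \<union> (if 6 \<le> n then {- w} else {}))"
proof -
  define J where "J k \<longleftrightarrow> k + 3 \<le> n \<and> odd (n - k)" for k
  define \<mu> where "\<mu> k = spectrum_pattern l w x (n - k)" for k
  have J: "J k \<Longrightarrow> k + 3 \<le> n" "J k \<Longrightarrow> \<not> J (Suc k)" "k + 3 \<le> n \<Longrightarrow> \<not> J k \<Longrightarrow> J (Suc k)" for k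
    unfolding J_def by presburger+
  have \<mu>_J: "\<mu> k = w" if "J k" for k
    using that unfolding J_def \<mu>_def spectrum_pattern_def by auto
  have \<mu>_not_J: "\<mu> k \<noteq> w" if "Suc k < n" "\<not> J k" for k
  proof -
    have "n - k = 2 \<or> (even (n - k) \<and> n - k \<noteq> 2)"
      using that unfolding J_def by presburger
    then show ?thesis
      using assms(4-6) unfolding \<mu>_def spectrum_pattern_def by auto
  qed
  have sum: "(\<Sum>k<n - 1. \<mu> k) = l + (if odd n then w else 0) + (x + w)"
    unfolding \<mu>_def by (rule spectrum_pattern_sum[OF n4])
  have "\<mu> (n - 2) = l"
    using n4 by (simp add: \<mu>_def spectrum_pattern_def)
  then obtain M where "M \<in> carrier_mat n n" "M * M = 0\<^sub>m n n" "diagonalizable (A + M)"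
    "{k. eigenvalue (A + M) k} = insert (mat_trace A - (\<Sum>k<n - 1. \<mu> k)) (\<mu> ` {..<n - 1})"
    using non_derogatory_square_zero_perturbation[of A n J \<mu> w, OF A nd _ J \<mu>_J \<mu>_not_J] n4 last_ne
    unfolding sum by auto
  moreover have "\<mu> ` {..<n - 1} = {l, w, x} \<union> (if 6 \<le> n then {- w} else {})"
    unfolding \<mu>_def by (rule spectrum_pattern_image[OF n4])
  ultimately show ?thesis
    unfolding sum by blast
qed

lemma two_neq_zero_of_odd_char:
  assumes "odd CHAR('a::field)"
  shows "(2::'a) \<noteq> 0"
proof
  assume "(2::'a) = 0"
  then have dvd: "CHAR('a) dvd 2"
    using of_nat_eq_0_iff_char_dvd[of 2, where 'a = 'a] by simp
  then have "CHAR('a) \<noteq> 0"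
    by (intro notI) simp
  moreover have "CHAR('a) \<le> 2"
    using dvd_imp_le[OF dvd] by simp
  ultimately show False
    using assms CHAR_not_1[where 'a = 'a]
    by (metis One_nat_def even_numeral le_neq_implies_less less_2_cases)
qed

lemma square_zero_spectrum_nonzero_trace:
  fixes A :: "'a::field mat"
  assumes char: "odd CHAR('a)" and n4: "4 \<le> n" and A: "A \<in> carrier_mat n n" and nd: "non_derogatory A"
    and c: "mat_trace A \<noteq> 0"
  shows "\<exists>M \<in> carrier_mat n n. M * M = 0\<^sub>m n n \<and> diagonalizable (A + M) \<and>
    {k. eigenvalue (A + M) k} = {0, mat_trace A, - mat_trace A}"
proof -
  let ?c = "mat_trace A"
  have two: "(2::'a) \<noteq> 0"
    by (rule two_neq_zero_of_odd_char[OF char])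
  show ?thesis
  proof (cases "even n")
    case True
    have "insert ?c ({0, - ?c, ?c} \<union> (if 6 \<le> n then {- (- ?c)} else {})) = {0, ?c, - ?c}"
      by auto
    then show ?thesis
      using non_derogatory_pattern_perturbation[OF A nd n4, of "- ?c" 0 ?c] True two c by simp
  next
    case False
    have "insert (- ?c) ({0, ?c, 0} \<union> (if 6 \<le> n then {- ?c} else {})) = {0, ?c, - ?c}"
      by auto
    then show ?thesis
      using non_derogatory_pattern_perturbation[OF A nd n4, of ?c 0 0] False two c by simp
  qed
qed

lemma square_zero_spectrum_zero_trace_odd:
  fixes A :: "'a::field mat"
  assumes char: "odd CHAR('a)" and n4: "4 \<le> n" and A: "A \<in> carrier_mat n n" and nd: "non_derogatory A"
    and "mat_trace A = 0" and "odd n"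
  shows "\<exists>M \<in> carrier_mat n n. M * M = 0\<^sub>m n n \<and> diagonalizable (A + M) \<and>
    {k. eigenvalue (A + M) k} = {0, 1, - 1}"
proof -
  have "insert (- 1) ({0, 1, - 1} \<union> (if 6 \<le> n then {- 1} else {})) = {0, 1, - 1 :: 'a}"
    by auto
  then show ?thesis
    using non_derogatory_pattern_perturbation[OF A nd n4, of 1 0 "- 1"] two_neq_zero_of_odd_char[OF char] assms
    by simp
qed

lemma exists_not_zero_one_minus_one:
  assumes "odd CHAR('a)" and "\<not> (finite (UNIV :: 'a set) \<and> card (UNIV :: 'a set) = 3)"
  shows "\<exists>t :: 'a::field. t \<noteq> 0 \<and> t \<noteq> 1 \<and> t \<noteq> - 1"
proof -
  have "card {0, 1, - 1 :: 'a} = 3"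
    using two_neq_zero_of_odd_char[OF assms(1)] by simp
  then have "(UNIV :: 'a set) \<noteq> {0, 1, - 1}"
    using assms(2) by (metis finite.emptyI finite.insertI)
  then show ?thesis
    by blast
qed

lemma square_zero_spectrum_zero_trace_even:
  fixes A :: "'a::field mat"
  assumes char: "odd CHAR('a)" and n4: "4 \<le> n" and A: "A \<in> carrier_mat n n" and nd: "non_derogatory A"
    and "mat_trace A = 0" and "even n" and not_F3: "\<not> (finite (UNIV :: 'a set) \<and> card (UNIV :: 'a set) = 3)"
  shows "\<exists>M \<in> carrier_mat n n. M * M = 0\<^sub>m n n \<and> diagonalizable (A + M) \<and>
    card {k. eigenvalue (A + M) k} \<le> 4"
proof -
  obtain t :: 'a where t: "t \<noteq> 0" "t \<noteq> 1" "t \<noteq> - 1"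
    using exists_not_zero_one_minus_one[OF char not_F3] by blast
  have "insert (- t) ({t, 1, - 1} \<union> (if 6 \<le> n then {- 1} else {})) \<subseteq> {- t, t, 1, - 1}"
    by auto
  moreover have "- t \<noteq> 1"
    using t(3) by (metis minus_minus)
  ultimately obtain M where "M \<in> carrier_mat n n" "M * M = 0\<^sub>m n n" "diagonalizable (A + M)"
    and spectrum: "{k. eigenvalue (A + M) k} \<subseteq> {- t, t, 1, - 1}"
    using non_derogatory_pattern_perturbation[OF A nd n4, of 1 t "- 1"] two_neq_zero_of_odd_char[OF char]
      assms t by auto
  moreover have "card {- t, t, 1, - 1} \<le> 4"
    using card_length[of "[- t, t, 1, - 1]"] by simp
  ultimately show ?thesis
    using card_mono[OF _ spectrum] by fastforce
qed

lemma non_derogatory_square_zero_diagonalizable: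
  fixes A :: "'a::field mat"
  assumes char: "odd CHAR('a)" and n4: "4 \<le> n" and A: "A \<in> carrier_mat n n" and nd: "non_derogatory A"
    and not_F3: "\<not> (finite (UNIV :: 'a set) \<and> card (UNIV :: 'a set) = 3)"
  shows "\<exists>M \<in> carrier_mat n n. M * M = 0\<^sub>m n n \<and> diagonalizable (A + M)"
proof -
  consider "mat_trace A \<noteq> 0" | "mat_trace A = 0" "odd n" | "mat_trace A = 0" "even n"
    by blast
  then show ?thesis
  proof cases
    case 1
    then show ?thesis
      using square_zero_spectrum_nonzero_trace[OF char n4 A nd] by blast
  next
    case 2
    then show ?thesis
      using square_zero_spectrum_zero_trace_odd[OF char n4 A nd] by blast
  next
    case 3
    then show ?thesis
      using square_zero_spectrum_zero_trace_even[OF char n4 A nd _ _ not_F3] by blast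
  qed
qed

lemma square_zero_perturbation_imp_decomposition:
  fixes A :: "'a::field mat"
  assumes A: "A \<in> carrier_mat n n" and M: "M \<in> carrier_mat n n"
    and "M * M = 0\<^sub>m n n" and "diagonalizable (A + M)"
  shows "\<exists>D \<in> carrier_mat n n. \<exists>M \<in> carrier_mat n n. diagonalizable D \<and> M * M = 0\<^sub>m n n \<and> A = D + M"
proof (intro bexI conjI)
  show "- M * - M = 0\<^sub>m n n"
    using assms by simp
  show "A = A + M + - M"
    using A M by (auto intro!: eq_matI)
qed (use assms in auto)

theorem proposition2p1:
  fixes n :: nat and A :: "'a :: field mat"
  assumes char_odd: "odd CHAR('a)"
    and n5: "n \<ge> 5"
    and A: "A \<in> carrier_mat n n"
    and nd: "non_derogatory A"
  shows
    "(mat_trace A \<noteq> 0 \<longrightarrow>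
       (\<exists>M \<in> carrier_mat n n. M * M = 0\<^sub>m n n \<and> diagonalizable (A + M) \<and>
          {k. eigenvalue (A + M) k} = {0, mat_trace A, - mat_trace A}))
   \<and> (mat_trace A = 0 \<and> odd n \<longrightarrow>
       (\<exists>M \<in> carrier_mat n n. M * M = 0\<^sub>m n n \<and> diagonalizable (A + M) \<and>
          {k. eigenvalue (A + M) k} = {0, 1, -1}))
   \<and> (mat_trace A = 0 \<and> even n \<and> \<not> (finite (UNIV :: 'a set) \<and> card (UNIV :: 'a set) = 3) \<longrightarrow>
       (\<exists>M \<in> carrier_mat n n. M * M = 0\<^sub>m n n \<and> diagonalizable (A + M) \<and>
          card {k. eigenvalue (A + M) k} \<le> 4))
   \<and> (finite (UNIV :: 'a set) \<and> odd (card (UNIV :: 'a set)) \<and> card (UNIV :: 'a set) \<ge> 5 \<longrightarrow>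
       (\<exists>D \<in> carrier_mat n n. \<exists>M \<in> carrier_mat n n.
          diagonalizable D \<and> M * M = 0\<^sub>m n n \<and> A = D + M))"
proof (intro conjI impI)
  have n4: "4 \<le> n"
    using n5 by simp
  show "\<exists>M \<in> carrier_mat n n. M * M = 0\<^sub>m n n \<and> diagonalizable (A + M) \<and>
      {k. eigenvalue (A + M) k} = {0, mat_trace A, - mat_trace A}" if "mat_trace A \<noteq> 0"
    using square_zero_spectrum_nonzero_trace[OF char_odd n4 A nd that] .
  show "\<exists>M \<in> carrier_mat n n. M * M = 0\<^sub>m n n \<and> diagonalizable (A + M) \<and>
      {k. eigenvalue (A + M) k} = {0, 1, -1}" if "mat_trace A = 0 \<and> odd n"
    using square_zero_spectrum_zero_trace_odd[OF char_odd n4 A nd] that by blast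
  show "\<exists>M \<in> carrier_mat n n. M * M = 0\<^sub>m n n \<and> diagonalizable (A + M) \<and>
      card {k. eigenvalue (A + M) k} \<le> 4"
    if "mat_trace A = 0 \<and> even n \<and> \<not> (finite (UNIV :: 'a set) \<and> card (UNIV :: 'a set) = 3)"
    using square_zero_spectrum_zero_trace_even[OF char_odd n4 A nd] that by blast
  show "\<exists>D \<in> carrier_mat n n. \<exists>M \<in> carrier_mat n n. diagonalizable D \<and> M * M = 0\<^sub>m n n \<and> A = D + M"
    if "finite (UNIV :: 'a set) \<and> odd (card (UNIV :: 'a set)) \<and> card (UNIV :: 'a set) \<ge> 5"
    using non_derogatory_square_zero_diagonalizable[OF char_odd n4 A nd] that
      square_zero_perturbation_imp_decomposition[OF A] by fastforce
qed

end
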